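(* Assume $\tau(p_j)>\min\{m',\tau(n_j)\}$ for all $j\in[k]$. Fix $\mathcal{A}$ and $b$. Then for a generic $C\in\mathbb{S}^{\mathbf n}\times\mathbb{R}^d$ (i.e. outside a Lebesgue measure zero set), problem (BM$_{\mathbf n}$) has no spurious 2-critical points.
   Context: Let $\mathbb{S}^{r}$ denote real symmetric $r\times r$ matrices, $\mathbb{S}^r_+$ the PSD cone, $A\bullet B=\operatorname{trace}(A^TB)$, $\tau(r)=\binom{r+1}{2}$. Let $\mathbf n=(n_1,\dots,n_\ell)$, $d\ge 0$, $1\le k\le \ell$, $\mathbb{S}^{\mathbf n}=\mathbb{S}^{n_1}\times\cdots\times\mathbb{S}^{n_\ell}$, $\mathbb{S}^{\mathbf n}_+=\mathbb{S}^{n_1}_+\times\cdots\times\mathbb{S}^{n_\ell}_+$, with the inner product $\langle\cdot,\cdot\rangle$ on $\mathbb{S}^{\mathbf n}\times\mathbb{R}^d$ being the sum of trace inner products and the dot product. Let $C\in\mathbb{S}^{\mathbf n}\times\mathbb{R}^d$, $b\in\mathbb{R}^m$, and $\mathcal{A}:\mathbb{S}^{\mathbf n}\times\mathbb{R}^d\to\mathbb{R}^m$ linear, written $\mathcal{A}(X_1,\dots,X_\ell,x)=\sum_j\mathcal{A}_j(X_j)+\mathcal{A}_0(x)$ with $\mathcal{A}_j(X_j)=(A_{i,j}\bullet X_j)_{i\in[m]}$, $A_{i,j}\in\mathbb{S}^{n_j}$ (this formula also defines $\mathcal{A}_j$ on nonsymmetric matrices); $\mathcal{A}^*$ is its adjoint.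 Let $\mathscr{X}=\{X=(X_1,\dots,X_\ell,x)\in\mathbb{S}^{\mathbf n}_+\times\mathbb{R}^d:\mathcal{A}(X)=b\}$, assumed nonempty, with $\min_{X\in\mathscr{X}}\langle C,X\rangle$ (SDP$_{\mathbf n}$) attained. For positive integers $p_1,\dots,p_k$, let $Y=(Y_1,\dots,Y_k)$, $Y_j\in\mathbb{R}^{n_j\times p_j}$, $q(Y)=(Y_1Y_1^T,\dots,Y_kY_k^T)$, $\overline X=(X_{k+1},\dots,X_\ell)$. Problem (BM$_{\mathbf n}$) is $\min_{Y,\overline X,x}\langle C,(q(Y),\overline X,x)\rangle$ subject to $(q(Y),\overline X,x)\in\mathscr{X}$. For $\lambda\in\mathbb{R}^m$ let $S(\lambda)=C-\mathcal{A}^*(\lambda)$ with components $S_j(\lambda)\in\mathbb{S}^{n_j}$ ($j\in[\ell]$) and $s(\lambda)\in\mathbb{R}^d$, and $\overline S(\lambda)=(S_{k+1}(\lambda),\dots,S_\ell(\lambda))$. A point $(Y,\overline X,x)$ is 1-critical if $(q(Y),\overline X,x)\in\mathscr{X}$ and there is $\lambda\in\mathbb{R}^m$ with $S_j(\lambda)\in\mathbb{S}^{n_j}_+$ for $j>k$, $\sum_{j>k}S_j(\lambda)\bullet X_j=0$, $s(\lambda)=0$, and $S_j(\lambda)Y_j=0$ for $j\in[k]$; it is 2-critical if moreover, for each $j\in[k]$, $S_j(\lambda)\bullet U_jU_j^T\ge0$ for all $U_j\in\mathbb{R}^{n_j\times p_j}$ with $\mathcal{A}_j(U_jY_j^T)=0$.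 A critical point is spurious if it is not a global minimizer of (BM$_{\mathbf n}$). A tuple $(r_{k+1},\dots,r_\ell)$ is a possible rank tuple if some $X\in\mathscr{X}$ has $\operatorname{rank}X_j=r_j$ for all $j>k$. Define $m'=\max\{m-d-\sum_{j>k}\tau(r_j)\}$ over possible rank tuples. *)

theory Defs
  imports "HOL-Probability.Probability" "Jordan_Normal_Form.DL_Rank"
begin

(* Conventions: block indices are 0-based, j \<in> {0..<l}; the first k blocks
   {0..<k} are factorized, blocks {k..<l} are kept as PSD matrices.  Data of the linear map \<A>:
     A i j  :: real mat   (the matrix A_{i,j}, symmetric, size n j \<times> n j)
     A0 i   :: real vec   (row i of \<A>_0 : R^d \<rightarrow> R^m, so \<A>_0(x)_i is the dot product of A0 i and x)
   A point of S^n \<times> R^d is a pair (Xs, x) with Xs :: nat \<Rightarrow> real mat. *)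

definition tau :: "nat \<Rightarrow> nat" where
  "tau r = (r + 1) choose 2"

definition mtrace :: "real mat \<Rightarrow> real" where
  "mtrace M = (\<Sum>i<dim_row M. M $$ (i, i))"

definition frob :: "real mat \<Rightarrow> real mat \<Rightarrow> real" where
  "frob P Q = mtrace (transpose_mat P * Q)"

definition psd :: "nat \<Rightarrow> real mat \<Rightarrow> bool" where
  "psd r X \<longleftrightarrow> X \<in> carrier_mat r r \<and> transpose_mat X = X \<and>
     (\<forall>v \<in> carrier_vec r. scalar_prod v (X *\<^sub>v v) \<ge> 0)"

definition symm :: "nat \<Rightarrow> real mat \<Rightarrow> bool" where
  "symm r X \<longleftrightarrow> X \<in> carrier_mat r r \<and> transpose_mat X = X"

text \<open>\<A>_j applied to an arbitrary (possibly nonsymmetric) n_j x n_j matrix.\<close>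
definition Aj :: "nat \<Rightarrow> (nat \<Rightarrow> nat \<Rightarrow> real mat) \<Rightarrow> nat \<Rightarrow> real mat \<Rightarrow> real vec" where
  "Aj m A j M = Matrix.vec m (\<lambda>i. frob (A i j) M)"

definition Aop :: "nat \<Rightarrow> nat \<Rightarrow> (nat \<Rightarrow> nat \<Rightarrow> real mat) \<Rightarrow> (nat \<Rightarrow> real vec)
    \<Rightarrow> (nat \<Rightarrow> real mat) \<Rightarrow> real vec \<Rightarrow> real vec" where
  "Aop l m A A0 Xs x = Matrix.vec m (\<lambda>i. (\<Sum>j<l. frob (A i j) (Xs j)) + scalar_prod (A0 i) x)"

definition feasible :: "nat \<Rightarrow> (nat \<Rightarrow> nat) \<Rightarrow> nat \<Rightarrow> nat \<Rightarrow> (nat \<Rightarrow> nat \<Rightarrow> real mat)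
    \<Rightarrow> (nat \<Rightarrow> real vec) \<Rightarrow> real vec \<Rightarrow> (nat \<Rightarrow> real mat) \<Rightarrow> real vec \<Rightarrow> bool" where
  "feasible l n d m A A0 b Xs x \<longleftrightarrow>
     (\<forall>j<l. psd (n j) (Xs j)) \<and> x \<in> carrier_vec d \<and> Aop l m A A0 Xs x = b"

definition obj :: "nat \<Rightarrow> (nat \<Rightarrow> real mat) \<Rightarrow> real vec \<Rightarrow> (nat \<Rightarrow> real mat) \<Rightarrow> real vec \<Rightarrow> real" where
  "obj l C c Xs x = (\<Sum>j<l. frob (C j) (Xs j)) + scalar_prod c x"

definition sdp_attained where
  "sdp_attained l n d m A A0 b C c \<longleftrightarrow>
     (\<exists>Xs x. feasible l n d m A A0 b Xs x \<and>
        (\<forall>Xs' x'. feasible l n d m A A0 b Xs' x' \<longrightarrow> obj l C c Xs x \<le> obj l C c Xs' x'))"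

definition qcomb :: "nat \<Rightarrow> (nat \<Rightarrow> real mat) \<Rightarrow> (nat \<Rightarrow> real mat) \<Rightarrow> nat \<Rightarrow> real mat" where
  "qcomb k Ys Xs = (\<lambda>j. if j < k then Ys j * transpose_mat (Ys j) else Xs j)"

definition bm_feasible where
  "bm_feasible l n d m A A0 b k p Ys Xs x \<longleftrightarrow>
     (\<forall>j<k. Ys j \<in> carrier_mat (n j) (p j)) \<and>
     feasible l n d m A A0 b (qcomb k Ys Xs) x"

definition bm_global_min where
  "bm_global_min l n d m A A0 b k p C c Ys Xs x \<longleftrightarrow>
     bm_feasible l n d m A A0 b k p Ys Xs x \<and>
     (\<forall>Ys' Xs' x'. bm_feasible l n d m A A0 b k p Ys' Xs' x' \<longrightarrow>
        obj l C c (qcomb k Ys Xs) x \<le> obj l C c (qcomb k Ys' Xs') x')"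

text \<open>S(\<lambda>) = C - \<A>^*(\<lambda>): matrix blocks and vector part.\<close>
definition Sblk :: "(nat \<Rightarrow> nat) \<Rightarrow> nat \<Rightarrow> (nat \<Rightarrow> nat \<Rightarrow> real mat) \<Rightarrow> (nat \<Rightarrow> real mat) \<Rightarrow> real vec \<Rightarrow> nat \<Rightarrow> real mat" where
  "Sblk n m A C lam j = Matrix.mat (n j) (n j)
     (\<lambda>(a, a'). C j $$ (a, a') - (\<Sum>i<m. vec_index lam i * A i j $$ (a, a')))"

definition Svec :: "nat \<Rightarrow> nat \<Rightarrow> (nat \<Rightarrow> real vec) \<Rightarrow> real vec \<Rightarrow> real vec \<Rightarrow> real vec" where
  "Svec d m A0 c lam = c - Matrix.vec d (\<lambda>t. \<Sum>i<m. vec_index lam i * vec_index (A0 i) t)"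

definition one_critical_mult where
  "one_critical_mult l n d m A A0 b k p C c Ys Xs x lam \<longleftrightarrow>
     bm_feasible l n d m A A0 b k p Ys Xs x \<and> lam \<in> carrier_vec m \<and>
     (\<forall>j\<in>{k..<l}. psd (n j) (Sblk n m A C lam j)) \<and>
     (\<Sum>j\<in>{k..<l}. frob (Sblk n m A C lam j) (Xs j)) = 0 \<and>
     Svec d m A0 c lam = 0\<^sub>v d \<and>
     (\<forall>j<k. Sblk n m A C lam j * Ys j = 0\<^sub>m (n j) (p j))"

definition one_critical where
  "one_critical l n d m A A0 b k p C c Ys Xs x \<longleftrightarrow>
     (\<exists>lam. one_critical_mult l n d m A A0 b k p C c Ys Xs x lam)"

definition two_critical where
  "two_critical l n d m A A0 b k p C c Ys Xs x \<longleftrightarrow>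
     (\<exists>lam. one_critical_mult l n d m A A0 b k p C c Ys Xs x lam \<and>
        (\<forall>j<k. \<forall>U \<in> carrier_mat (n j) (p j).
            Aj m A j (U * transpose_mat (Ys j)) = 0\<^sub>v m \<longrightarrow>
            frob (Sblk n m A C lam j) (U * transpose_mat U) \<ge> 0))"

definition spurious_two_critical where
  "spurious_two_critical l n d m A A0 b k p C c Ys Xs x \<longleftrightarrow>
     two_critical l n d m A A0 b k p C c Ys Xs x \<and>
     \<not> bm_global_min l n d m A A0 b k p C c Ys Xs x"

text \<open>Possible rank tuples (r_{k+1},...,r_l), as functions on {k..<l}.\<close>
definition possible_rank_tuple where
  "possible_rank_tuple l n d m A A0 b k r \<longleftrightarrow>
     (\<exists>Xs x. feasible l n d m A A0 b Xs x \<and>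
        (\<forall>j\<in>{k..<l}. vec_space.rank (n j) (Xs j) = r j))"

definition m_prime :: "nat \<Rightarrow> (nat \<Rightarrow> nat) \<Rightarrow> nat \<Rightarrow> nat \<Rightarrow> (nat \<Rightarrow> nat \<Rightarrow> real mat)
    \<Rightarrow> (nat \<Rightarrow> real vec) \<Rightarrow> real vec \<Rightarrow> nat \<Rightarrow> int" where
  "m_prime l n d m A A0 b k =
     Max {int m - int d - (\<Sum>j\<in>{k..<l}. int (tau (r j))) | r.
            possible_rank_tuple l n d m A A0 b k r}"

text \<open>Coordinates of the cost space S^n \<times> R^d: coordinate Inl (j,a,a') with
  j<l, a \<le> a' < n j is the (a,a') = (a',a) entry of C_j; coordinate Inr t with t<d is c_t.
  Lebesgue measure on S^n \<times> R^d is the product Lebesgue measure in these coordinates.\<close>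
definition cost_coords :: "nat \<Rightarrow> (nat \<Rightarrow> nat) \<Rightarrow> nat \<Rightarrow> ((nat \<times> nat \<times> nat) + nat) set" where
  "cost_coords l n d = Inl ` {(j, a, a'). j < l \<and> a \<le> a' \<and> a' < n j} \<union> Inr ` {..<d}"

definition cost_measure :: "nat \<Rightarrow> (nat \<Rightarrow> nat) \<Rightarrow> nat \<Rightarrow> (((nat \<times> nat \<times> nat) + nat) \<Rightarrow> real) measure" where
  "cost_measure l n d = PiM (cost_coords l n d) (\<lambda>_. lborel)"

definition Cmat_of :: "(nat \<Rightarrow> nat) \<Rightarrow> (((nat \<times> nat \<times> nat) + nat) \<Rightarrow> real) \<Rightarrow> nat \<Rightarrow> real mat" where
  "Cmat_of n v j = Matrix.mat (n j) (n j) (\<lambda>(a, a'). v (Inl (j, min a a', max a a')))"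

definition cvec_of :: "nat \<Rightarrow> (((nat \<times> nat \<times> nat) + nat) \<Rightarrow> real) \<Rightarrow> real vec" where
  "cvec_of d v = Matrix.vec d (\<lambda>t. v (Inr t))"

end

(*
  At a spurious second-order critical point with multiplier \<lambda>, some factor Y_j has full column
  rank p_j: otherwise the second-order condition, tested on the rank-one directions u w^T with
  Y_j w = 0, makes the slack S(\<lambda>) = C - A^*(\<lambda>) positive semidefinite, and S(\<lambda>) certifies
  global optimality. Complementarity gives S_j Y_j = 0 and S_j X_j = 0, so the columns of S_j are
  spanned by at most n_j - p_j, resp. n_j - rank X_j, of them. A symmetric matrix whose columns are
  spanned by those indexed by R is determined by its entries in the rows of R together with the
  coefficients expressing the other columns, tau(n_j) - tau(n_j - |R|) numbers in all. Hence
  (C, c) = (S + A^*(\<lambda>), A_0^*(\<lambda>)) lies in the image of a locally Lipschitz map on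
  sum_j (tau(n_j) - tau(n_j - |R_j|)) + m coordinates, which is fewer than sum_j tau(n_j) + d as
  soon as tau(p_j) > m'. Finitely many choices of the index sets R_j cover all costs with a
  spurious point, and each such image is Lebesgue-null.
*)
theory Submission
  imports Defs
begin

section \<open>Positive semidefinite forms\<close>

text \<open>Square matrices are handled as functions on \<open>{..<n} \<times> {..<n}\<close>, which makes induction on \<open>n\<close>
  easy; \<open>psd_iff_psd_on\<close> transfers the results to \<open>real mat\<close>.\<close>

definition bilin :: "nat \<Rightarrow> (nat \<Rightarrow> nat \<Rightarrow> real) \<Rightarrow> (nat \<Rightarrow> real) \<Rightarrow> (nat \<Rightarrow> real) \<Rightarrow> real" where
  "bilin n M u w = (\<Sum>a<n. \<Sum>b<n. u a * M a b * w b)"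

definition symmetric_on :: "nat \<Rightarrow> (nat \<Rightarrow> nat \<Rightarrow> real) \<Rightarrow> bool" where
  "symmetric_on n M \<longleftrightarrow> (\<forall>a<n. \<forall>b<n. M a b = M b a)"

definition psd_on :: "nat \<Rightarrow> (nat \<Rightarrow> nat \<Rightarrow> real) \<Rightarrow> bool" where
  "psd_on n M \<longleftrightarrow> symmetric_on n M \<and> (\<forall>u. 0 \<le> bilin n M u u)"

lemma bilin_commute: "symmetric_on n M \<Longrightarrow> bilin n M u w = bilin n M w u"
  unfolding bilin_def symmetric_on_def
  by (subst sum.swap) (auto intro!: sum.cong simp: mult_ac)

lemma bilin_shift:
  assumes "symmetric_on n M"
  shows "bilin n M (\<lambda>a. u a + t * e a) (\<lambda>a. u a + t * e a) =
         bilin n M u u + 2 * t * bilin n M u e + t\<^sup>2 * bilin n M e e"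
proof -
  have "bilin n M (\<lambda>a. u a + t * e a) (\<lambda>a. u a + t * e a) =
        (\<Sum>a<n. \<Sum>b<n. u a * M a b * u b + t * (u a * M a b * e b) + t * (e a * M a b * u b)
                        + t\<^sup>2 * (e a * M a b * e b))"
    unfolding bilin_def by (intro sum.cong refl) (simp add: algebra_simps power2_eq_square)
  also have "\<dots> = bilin n M u u + t * bilin n M u e + t * bilin n M e u + t\<^sup>2 * bilin n M e e"
    unfolding bilin_def by (simp add: sum.distrib sum_distrib_left)
  finally show ?thesis
    using bilin_commute[OF assms, of e u] by simp
qed

lemma quadratic_nonneg_imp_discriminant_le:
  fixes A B C :: real
  assumes nonneg: "\<And>t. 0 \<le> A + 2 * t * B + t\<^sup>2 * C"
  shows "B\<^sup>2 \<le> A * C"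
proof -
  have even: "0 \<le> A + t\<^sup>2 * C" for t
    using nonneg[of t] nonneg[of "- t"] by simp
  have "0 \<le> C"
  proof (rule ccontr)
    assume "\<not> 0 \<le> C"
    then have "(sqrt ((\<bar>A\<bar> + 1) / - C))\<^sup>2 * C = - (\<bar>A\<bar> + 1)"
      by (simp add: divide_nonneg_neg)
    then show False
      using even[of "sqrt ((\<bar>A\<bar> + 1) / - C)"] by simp
  qed
  show ?thesis
  proof (cases "C = 0")
    case True
    have "B = 0"
    proof (rule ccontr)
      assume "B \<noteq> 0"
      then have "A + 2 * (- (\<bar>A\<bar> + 1) / (2 * B)) * B = A - (\<bar>A\<bar> + 1)"
        by (simp add: field_simps)
      then show False
        using nonneg[of "- (\<bar>A\<bar> + 1) / (2 * B)"] True by simp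
    qed
    then show ?thesis
      using True by simp
  next
    case False
    with \<open>0 \<le> C\<close> have C: "0 < C"
      by simp
    have "0 \<le> A + 2 * (- B / C) * B + (- B / C)\<^sup>2 * C"
      by (rule nonneg)
    also have "\<dots> = A - B\<^sup>2 / C"
      using C by (simp add: field_simps power2_eq_square)
    finally show ?thesis
      using C by (simp add: field_simps mult.commute)
  qed
qed

lemma psd_on_cauchy_schwarz:
  assumes "psd_on n M"
  shows "(bilin n M u e)\<^sup>2 \<le> bilin n M u u * bilin n M e e"
proof (rule quadratic_nonneg_imp_discriminant_le)
  fix t
  show "0 \<le> bilin n M u u + 2 * t * bilin n M u e + t\<^sup>2 * bilin n M e e"
    using assms bilin_shift[of n M u t e] unfolding psd_on_def by metis
qed

lemma bilin_unit_left:
  assumes "a < n"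
  shows "bilin n M (\<lambda>c. if c = a then 1 else 0) w = (\<Sum>b<n. M a b * w b)"
proof -
  have "bilin n M (\<lambda>c. if c = a then 1 else 0) w = (\<Sum>c<n. if c = a then \<Sum>b<n. M a b * w b else 0)"
    unfolding bilin_def by (intro sum.cong refl) (simp add: mult.assoc)
  then show ?thesis
    using assms by simp
qed

lemma bilin_units:
  assumes "a < n" "b < n"
  shows "bilin n M (\<lambda>c. if c = a then 1 else 0) (\<lambda>c. if c = b then 1 else 0) = M a b"
proof -
  have "(\<Sum>c<n. M a c * (if c = b then 1 else 0)) = (\<Sum>c<n. if c = b then M a b else 0)"
    by (intro sum.cong refl) simp
  then show ?thesis
    using assms by (simp add: bilin_unit_left)
qed

lemma psd_on_diag_nonneg: "psd_on n M \<Longrightarrow> a < n \<Longrightarrow> 0 \<le> M a a"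
  unfolding psd_on_def by (metis bilin_units)

lemma psd_on_entry_square_le:
  assumes "psd_on n M" "a < n" "b < n"
  shows "(M a b)\<^sup>2 \<le> M a a * M b b"
  using psd_on_cauchy_schwarz[OF assms(1), of "\<lambda>c. if c = a then 1 else 0" "\<lambda>c. if c = b then 1 else 0"]
  by (simp add: bilin_units assms)

lemma psd_on_null_vector:
  assumes "psd_on n M" "bilin n M w w = 0" "a < n"
  shows "(\<Sum>b<n. M a b * w b) = 0"
  using psd_on_cauchy_schwarz[OF assms(1), of "\<lambda>c. if c = a then 1 else 0" w] assms(2,3)
  by (simp add: bilin_unit_left)

lemma psd_on_SucD:
  assumes "psd_on (Suc n) M"
  shows "psd_on n M"
  unfolding psd_on_def
proof
  show "symmetric_on n M"
    using assms unfolding psd_on_def symmetric_on_def by simp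
  show "\<forall>u. 0 \<le> bilin n M u u"
  proof
    fix u
    have "bilin n M u u = bilin (Suc n) M (u(n := 0)) (u(n := 0))"
      unfolding bilin_def by (auto intro!: sum.cong)
    then show "0 \<le> bilin n M u u"
      using assms unfolding psd_on_def by simp
  qed
qed

text \<open>One step of a Cholesky factorization. When \<open>M n n = 0\<close> the vector \<open>w\<close> vanishes because
  division by zero yields zero, so no case distinction is needed.\<close>

lemma psd_on_Schur_complement:
  assumes psd: "psd_on (Suc n) M"
  defines "w \<equiv> \<lambda>a. M a n / sqrt (M n n)"
  shows "psd_on (Suc n) (\<lambda>a b. M a b - w a * w b)"
  unfolding psd_on_def
proof
  show "symmetric_on (Suc n) (\<lambda>a b. M a b - w a * w b)"
    using psd unfolding psd_on_def symmetric_on_def by (simp add: mult.commute)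
  show "\<forall>u. 0 \<le> bilin (Suc n) (\<lambda>a b. M a b - w a * w b) u u"
  proof
    fix u
    let ?e = "\<lambda>c. if c = n then 1 else 0"
    have Mnn: "0 \<le> M n n"
      using psd by (simp add: psd_on_diag_nonneg)
    have sym: "symmetric_on (Suc n) M"
      using psd unfolding psd_on_def ..
    have "bilin (Suc n) M u ?e = (\<Sum>a<Suc n. M n a * u a)"
      using bilin_commute[OF sym] bilin_unit_left[of n "Suc n" M u] by simp
    also have "\<dots> = (\<Sum>a<Suc n. u a * M a n)"
      using sym unfolding symmetric_on_def by (intro sum.cong refl) simp
    finally have col: "bilin (Suc n) M u ?e = (\<Sum>a<Suc n. u a * M a n)" .
    have "bilin (Suc n) (\<lambda>a b. M a b - w a * w b) u u =
          bilin (Suc n) M u u - (\<Sum>a<Suc n. u a * w a) * (\<Sum>b<Suc n. u b * w b)"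
      unfolding bilin_def sum_product
      by (simp add: algebra_simps sum_subtractf)
    also have "(\<Sum>a<Suc n. u a * w a) = bilin (Suc n) M u ?e / sqrt (M n n)"
      unfolding col w_def sum_divide_distrib by (simp add: times_divide_eq_right del: sum.lessThan_Suc)
    finally have eq: "bilin (Suc n) (\<lambda>a b. M a b - w a * w b) u u =
        bilin (Suc n) M u u - (bilin (Suc n) M u ?e)\<^sup>2 / M n n"
      using Mnn by (simp add: power2_eq_square)
    have "(bilin (Suc n) M u ?e)\<^sup>2 \<le> bilin (Suc n) M u u * M n n"
      using psd_on_cauchy_schwarz[OF psd, of u ?e] by (simp add: bilin_units)
    then have "(bilin (Suc n) M u ?e)\<^sup>2 / M n n \<le> bilin (Suc n) M u u"
      using psd unfolding psd_on_def
      by (cases "M n n = 0") (simp_all add: Mnn divide_le_eq order_less_le)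
    then show "0 \<le> bilin (Suc n) (\<lambda>a b. M a b - w a * w b) u u"
      unfolding eq by simp
  qed
qed

lemma psd_on_gram:
  "psd_on n M \<Longrightarrow> \<exists>W. \<forall>a<n. \<forall>b<n. M a b = (\<Sum>i<n. W i a * W i b)"
proof (induction n arbitrary: M)
  case 0
  then show ?case by simp
next
  case (Suc n)
  define w where "w a = M a n / sqrt (M n n)" for a
  define M' where "M' a b = M a b - w a * w b" for a b
  have psd': "psd_on (Suc n) M'"
    using psd_on_Schur_complement[OF Suc.prems] unfolding M'_def w_def .
  have "M' n n = 0"
    using psd_on_diag_nonneg[OF Suc.prems, of n]
    unfolding M'_def w_def by (cases "M n n = 0") (simp_all add: power_divide power2_eq_square)
  then have last: "M' a n = 0" "M' n a = 0" if "a < Suc n" for a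
    using psd_on_entry_square_le[OF psd', of a n] psd' that
    unfolding psd_on_def symmetric_on_def by auto
  obtain W where W: "\<forall>a<n. \<forall>b<n. M' a b = (\<Sum>i<n. W i a * W i b)"
    using Suc.IH[OF psd_on_SucD[OF psd']] by blast
  define W' where "W' i a = (if i < n then if a < n then W i a else 0 else w a)" for i a
  show ?case
  proof (intro exI allI impI)
    fix a b
    assume ab: "a < Suc n" "b < Suc n"
    have "M a b = M' a b + w a * w b"
      unfolding M'_def by simp
    also have "M' a b = (\<Sum>i<n. W' i a * W' i b)"
      using W last ab unfolding W'_def by (cases "a = n \<or> b = n") auto
    finally show "M a b = (\<Sum>i<Suc n. W' i a * W' i b)"
      by (simp add: W'_def)
  qed
qed

lemma trace_product_gram:
  assumes "\<forall>a<n. \<forall>b<n. X a b = (\<Sum>i<n. W i a * W i b)"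
  shows "(\<Sum>a<n. \<Sum>b<n. S a b * X a b) = (\<Sum>i<n. bilin n S (W i) (W i))"
proof -
  have "(\<Sum>a<n. \<Sum>b<n. S a b * X a b) = (\<Sum>a<n. \<Sum>b<n. \<Sum>i<n. W i a * S a b * W i b)"
    using assms by (auto intro!: sum.cong simp: sum_distrib_left algebra_simps)
  also have "\<dots> = (\<Sum>i<n. bilin n S (W i) (W i))"
    unfolding bilin_def by (subst sum.swap, rule sum.cong, simp, subst sum.swap, simp)
  finally show ?thesis .
qed

lemma psd_on_trace_product_nonneg:
  assumes "psd_on n S" "psd_on n X"
  shows "0 \<le> (\<Sum>a<n. \<Sum>b<n. S a b * X a b)"
proof -
  obtain W where W: "\<forall>a<n. \<forall>b<n. X a b = (\<Sum>i<n. W i a * W i b)"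
    using psd_on_gram[OF assms(2)] by blast
  show ?thesis
    using assms(1) unfolding trace_product_gram[OF W] psd_on_def by (simp add: sum_nonneg)
qed

lemma psd_on_trace_product_eq_0:
  assumes "psd_on n S" "psd_on n X" "(\<Sum>a<n. \<Sum>b<n. S a b * X a b) = 0" "a < n" "b < n"
  shows "(\<Sum>c<n. S a c * X c b) = 0"
proof -
  obtain W where W: "\<forall>a<n. \<forall>b<n. X a b = (\<Sum>i<n. W i a * W i b)"
    using psd_on_gram[OF assms(2)] by blast
  have "\<forall>i\<in>{..<n}. 0 \<le> bilin n S (W i) (W i)"
    using assms(1) unfolding psd_on_def by simp
  moreover have "(\<Sum>i<n. bilin n S (W i) (W i)) = 0"
    using assms(3) unfolding trace_product_gram[OF W] .
  ultimately have null: "bilin n S (W i) (W i) = 0" if "i < n" for i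
    using that sum_nonneg_eq_0_iff[of "{..<n}" "\<lambda>i. bilin n S (W i) (W i)"] by simp
  have "(\<Sum>c<n. S a c * X c b) = (\<Sum>c<n. \<Sum>i<n. S a c * W i c * W i b)"
    using W assms(5) by (auto intro!: sum.cong simp: sum_distrib_left algebra_simps)
  also have "\<dots> = (\<Sum>i<n. (\<Sum>c<n. S a c * W i c) * W i b)"
    by (subst sum.swap) (simp add: sum_distrib_right)
  also have "\<dots> = 0"
    using psd_on_null_vector[OF assms(1) null assms(4)] by simp
  finally show ?thesis .
qed

lemma symm_carrier: "symm r X \<Longrightarrow> X \<in> carrier_mat r r"
  unfolding symm_def by simp

lemma symm_entry: "symm r X \<Longrightarrow> a < r \<Longrightarrow> b < r \<Longrightarrow> X $$ (a, b) = X $$ (b, a)"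
  unfolding symm_def by (metis carrier_matD index_transpose_mat(1))

lemma symm_iff_symmetric_on:
  "X \<in> carrier_mat r r \<Longrightarrow> symm r X \<longleftrightarrow> symmetric_on r (\<lambda>a b. X $$ (a, b))"
  unfolding symmetric_on_def using symm_entry[of r X] by (auto simp: symm_def intro!: eq_matI)

lemma psd_iff_psd_on:
  assumes "X \<in> carrier_mat r r"
  shows "psd r X \<longleftrightarrow> psd_on r (\<lambda>a b. X $$ (a, b))"
proof -
  have quad: "scalar_prod v (X *\<^sub>v v) = bilin r (\<lambda>a b. X $$ (a, b)) (\<lambda>a. v $ a) (\<lambda>a. v $ a)"
    if "v \<in> carrier_vec r" for v
    using assms that unfolding bilin_def
    by (auto simp: scalar_prod_def sum_distrib_left mult.assoc intro!: sum.cong)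
  have "transpose_mat X = X \<longleftrightarrow> symmetric_on r (\<lambda>a b. X $$ (a, b))"
    using symm_iff_symmetric_on[OF assms] assms unfolding symm_def by simp
  moreover have "(\<forall>v \<in> carrier_vec r. 0 \<le> scalar_prod v (X *\<^sub>v v)) \<longleftrightarrow>
                 (\<forall>u. 0 \<le> bilin r (\<lambda>a b. X $$ (a, b)) u u)"
  proof (intro iffI allI)
    fix u
    assume "\<forall>v \<in> carrier_vec r. 0 \<le> scalar_prod v (X *\<^sub>v v)"
    then have "0 \<le> scalar_prod (vec r u) (X *\<^sub>v vec r u)"
      by simp
    also have "\<dots> = bilin r (\<lambda>a b. X $$ (a, b)) u u"
      using quad[of "vec r u"] by (simp add: bilin_def)
    finally show "0 \<le> bilin r (\<lambda>a b. X $$ (a, b)) u u" .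
  qed (simp add: quad)
  ultimately show ?thesis
    using assms unfolding psd_def psd_on_def by blast
qed

lemma frob_eq_sum:
  assumes "P \<in> carrier_mat r c" "Q \<in> carrier_mat r c"
  shows "frob P Q = (\<Sum>a<r. \<Sum>b<c. P $$ (a, b) * Q $$ (a, b))"
proof -
  have "frob P Q = (\<Sum>b<c. \<Sum>a<r. P $$ (a, b) * Q $$ (a, b))"
    using assms unfolding frob_def mtrace_def
    by (auto simp: scalar_prod_def intro!: sum.cong)
  then show ?thesis
    by (simp add: sum.swap[of _ "{..<c}"])
qed

lemma frob_psd_nonneg:
  assumes "psd r S" "psd r X"
  shows "0 \<le> frob S X"
proof -
  have "S \<in> carrier_mat r r" "X \<in> carrier_mat r r"
    using assms unfolding psd_def by auto
  then show ?thesis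
    using psd_on_trace_product_nonneg assms by (simp add: frob_eq_sum psd_iff_psd_on)
qed

lemma frob_psd_eq_0_imp_mult_eq_0:
  assumes "psd r S" "psd r X" "frob S X = 0"
  shows "S * X = 0\<^sub>m r r"
proof -
  have S: "S \<in> carrier_mat r r" and X: "X \<in> carrier_mat r r"
    using assms unfolding psd_def by auto
  show ?thesis
  proof (rule eq_matI)
    fix a b
    assume "a < dim_row (0\<^sub>m r r :: real mat)" "b < dim_col (0\<^sub>m r r :: real mat)"
    then have ab: "a < r" "b < r"
      by simp_all
    have "(\<Sum>c<r. S $$ (a, c) * X $$ (c, b)) = 0"
      using psd_on_trace_product_eq_0[of r "\<lambda>a b. S $$ (a, b)" "\<lambda>a b. X $$ (a, b)"] assms ab S X
      by (simp add: frob_eq_sum psd_iff_psd_on)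
    then show "(S * X) $$ (a, b) = 0\<^sub>m r r $$ (a, b)"
      using S X ab by (simp add: scalar_prod_def atLeast0LessThan)
  qed (use S X in auto)
qed

section \<open>Dual slack and global optimality\<close>

lemma Sblk_carrier [simp]: "Sblk n m A C lam j \<in> carrier_mat (n j) (n j)"
  unfolding Sblk_def by simp

lemma Sblk_index [simp]:
  "a < n j \<Longrightarrow> b < n j \<Longrightarrow>
   Sblk n m A C lam j $$ (a, b) = C j $$ (a, b) - (\<Sum>i<m. lam $ i * A i j $$ (a, b))"
  unfolding Sblk_def by simp

lemma Cmat_of_carrier [simp]: "Cmat_of n v j \<in> carrier_mat (n j) (n j)"
  unfolding Cmat_of_def by simp

lemma Cmat_of_index [simp]:
  "a < n j \<Longrightarrow> b < n j \<Longrightarrow> Cmat_of n v j $$ (a, b) = v (Inl (j, min a b, max a b))"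
  unfolding Cmat_of_def by simp

lemma symm_Cmat_of: "symm (n j) (Cmat_of n v j)"
  by (simp add: symm_iff_symmetric_on symmetric_on_def min.commute max.commute)

lemma symm_Sblk:
  assumes "symm (n j) (C j)" "\<And>i. i < m \<Longrightarrow> symm (n j) (A i j)"
  shows "symm (n j) (Sblk n m A C lam j)"
  using assms symm_entry[of "n j"] by (simp add: symm_iff_symmetric_on symmetric_on_def)

lemma frob_eq_frob_Sblk:
  assumes X: "X \<in> carrier_mat (n j) (n j)" and C: "C j \<in> carrier_mat (n j) (n j)"
    and A: "\<And>i. i < m \<Longrightarrow> A i j \<in> carrier_mat (n j) (n j)"
  shows "frob (C j) X = frob (Sblk n m A C lam j) X + (\<Sum>i<m. lam $ i * frob (A i j) X)"
proof -
  have A_sum: "frob (A i j) X = (\<Sum>a<n j. \<Sum>b<n j. A i j $$ (a, b) * X $$ (a, b))" if "i < m" for i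
    using frob_eq_sum[OF A[OF that] X] .
  have "(\<Sum>i<m. lam $ i * frob (A i j) X) =
        (\<Sum>i<m. \<Sum>a<n j. \<Sum>b<n j. lam $ i * A i j $$ (a, b) * X $$ (a, b))"
    by (intro sum.cong refl) (simp add: A_sum sum_distrib_left mult.assoc)
  also have "\<dots> = (\<Sum>a<n j. \<Sum>b<n j. (\<Sum>i<m. lam $ i * A i j $$ (a, b)) * X $$ (a, b))"
    by (simp add: sum_distrib_right sum.swap[of _ "{..<m}"])
  also have "\<dots> = frob (C j) X - frob (Sblk n m A C lam j) X"
    by (simp add: frob_eq_sum[OF C X] frob_eq_sum[OF Sblk_carrier[of n m A C lam j] X] sum_subtractf[symmetric]
        left_diff_distrib)
  finally show ?thesis
    by simp
qed

lemma obj_eq_dual: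
  assumes A_sym: "\<And>i j. i < m \<Longrightarrow> j < l \<Longrightarrow> symm (n j) (A i j)"
    and feas: "feasible l n d m A A0 b Xs x"
    and C: "\<And>j. j < l \<Longrightarrow> C j \<in> carrier_mat (n j) (n j)"
    and c: "c \<in> carrier_vec d"
    and s: "Svec d m A0 c lam = 0\<^sub>v d"
  shows "obj l C c Xs x = (\<Sum>j<l. frob (Sblk n m A C lam j) (Xs j)) + (\<Sum>i<m. lam $ i * b $ i)"
proof -
  have X: "Xs j \<in> carrier_mat (n j) (n j)" if "j < l" for j
    using feas that unfolding feasible_def psd_def by auto
  have x: "x \<in> carrier_vec d"
    using feas unfolding feasible_def by auto
  have b: "b $ i = (\<Sum>j<l. frob (A i j) (Xs j)) + scalar_prod (A0 i) x" if "i < m" for i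
    using feas that unfolding feasible_def Aop_def by auto
  have "c $ t = (\<Sum>i<m. lam $ i * A0 i $ t)" if "t < d" for t
    using c that arg_cong[OF s, of "\<lambda>v. v $ t"] unfolding Svec_def by simp
  then have cx: "scalar_prod c x = (\<Sum>i<m. lam $ i * scalar_prod (A0 i) x)"
    using x by (simp add: scalar_prod_def sum_distrib_left sum_distrib_right mult.assoc sum.swap[of _ "{..<m}"])
  have "frob (C j) (Xs j) = frob (Sblk n m A C lam j) (Xs j) + (\<Sum>i<m. lam $ i * frob (A i j) (Xs j))"
    if "j < l" for j
    using frob_eq_frob_Sblk[of "Xs j" n j C m A lam] X C symm_carrier[OF A_sym] that by blast
  then have "obj l C c Xs x = (\<Sum>j<l. frob (Sblk n m A C lam j) (Xs j)) +
      (\<Sum>j<l. \<Sum>i<m. lam $ i * frob (A i j) (Xs j)) + (\<Sum>i<m. lam $ i * scalar_prod (A0 i) x)"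
    unfolding obj_def cx by (simp add: sum.distrib)
  also have "\<dots> = (\<Sum>j<l. frob (Sblk n m A C lam j) (Xs j)) + (\<Sum>i<m. lam $ i * b $ i)"
    by (subst sum.swap) (simp add: b sum_distrib_left sum.distrib distrib_left)
  finally show ?thesis .
qed

lemma frob_mult_transpose_eq_0:
  assumes S: "S \<in> carrier_mat r r" and Y: "Y \<in> carrier_mat r q" and SY: "S * Y = 0\<^sub>m r q"
  shows "frob S (Y * transpose_mat Y) = 0"
proof -
  have SY_entry: "(\<Sum>b<r. S $$ (a, b) * Y $$ (b, c)) = 0" if "a < r" "c < q" for a c
    using arg_cong[OF SY, of "\<lambda>M. M $$ (a, c)"] S Y that by (simp add: scalar_prod_def atLeast0LessThan)
  have "frob S (Y * transpose_mat Y) =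
        (\<Sum>a<r. \<Sum>b<r. S $$ (a, b) * (\<Sum>c<q. Y $$ (a, c) * Y $$ (b, c)))"
    using S Y by (subst frob_eq_sum[where r = r and c = r])
      (auto simp: scalar_prod_def atLeast0LessThan intro!: sum.cong)
  also have "\<dots> = (\<Sum>c<q. \<Sum>a<r. Y $$ (a, c) * (\<Sum>b<r. S $$ (a, b) * Y $$ (b, c)))"
    by (simp add: sum_distrib_left sum_distrib_right sum.swap[of _ "{..<q}"] mult_ac)
  also have "\<dots> = 0"
    using SY_entry by simp
  finally show ?thesis .
qed

lemma bm_global_min_if_psd_Sblk:
  assumes A_sym: "\<And>i j. i < m \<Longrightarrow> j < l \<Longrightarrow> symm (n j) (A i j)"
    and kl: "k \<le> l"
    and C: "\<And>j. j < l \<Longrightarrow> C j \<in> carrier_mat (n j) (n j)"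
    and c: "c \<in> carrier_vec d"
    and crit: "one_critical_mult l n d m A A0 b k p C c Ys Xs x lam"
    and psd_S: "\<And>j. j < l \<Longrightarrow> psd (n j) (Sblk n m A C lam j)"
  shows "bm_global_min l n d m A A0 b k p C c Ys Xs x"
  unfolding bm_global_min_def
proof (intro conjI allI impI)
  let ?S = "Sblk n m A C lam"
  have bm: "bm_feasible l n d m A A0 b k p Ys Xs x"
    and s: "Svec d m A0 c lam = 0\<^sub>v d"
    and SY: "\<And>j. j < k \<Longrightarrow> ?S j * Ys j = 0\<^sub>m (n j) (p j)"
    and compl: "(\<Sum>j\<in>{k..<l}. frob (?S j) (Xs j)) = 0"
    using crit unfolding one_critical_mult_def by auto
  show "bm_feasible l n d m A A0 b k p Ys Xs x"
    by (fact bm)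
  have "frob (?S j) (Ys j * transpose_mat (Ys j)) = 0" if "j < k" for j
    using frob_mult_transpose_eq_0[OF Sblk_carrier[of n m A C lam j] _ SY[OF that]] bm that
    unfolding bm_feasible_def by blast
  then have "(\<Sum>j<k. frob (?S j) (qcomb k Ys Xs j)) = 0"
    by (simp add: qcomb_def)
  moreover have "(\<Sum>j\<in>{k..<l}. frob (?S j) (qcomb k Ys Xs j)) = 0"
    using compl by (simp add: qcomb_def)
  ultimately have zero: "(\<Sum>j<l. frob (?S j) (qcomb k Ys Xs j)) = 0"
    using sum.atLeastLessThan_concat[of 0 k l "\<lambda>j. frob (?S j) (qcomb k Ys Xs j)"] kl
    by (simp add: atLeast0LessThan)
  fix Ys' Xs' x'
  assume bm': "bm_feasible l n d m A A0 b k p Ys' Xs' x'"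
  have nonneg: "0 \<le> (\<Sum>j<l. frob (?S j) (qcomb k Ys' Xs' j))"
    using bm' psd_S unfolding bm_feasible_def feasible_def by (auto intro!: sum_nonneg frob_psd_nonneg)
  have feas: "feasible l n d m A A0 b (qcomb k Ys Xs) x"
    and feas': "feasible l n d m A A0 b (qcomb k Ys' Xs') x'"
    using bm bm' unfolding bm_feasible_def by simp_all
  show "obj l C c (qcomb k Ys Xs) x \<le> obj l C c (qcomb k Ys' Xs') x'"
    using zero nonneg obj_eq_dual[OF A_sym feas C c s] obj_eq_dual[OF A_sym feas' C c s]
    by simp
qed

lemma Aj_zero:
  assumes "\<And>i. i < m \<Longrightarrow> A i j \<in> carrier_mat r r"
  shows "Aj m A j (0\<^sub>m r r) = 0\<^sub>v m"
  by (intro eq_vecI) (simp_all add: Aj_def frob_eq_sum[OF assms zero_carrier_mat])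

text \<open>The second-order condition only tests directions \<open>U\<close> with \<open>U Y\<^sup>T = 0\<close>; if \<open>Y w = 0\<close> for some
  \<open>w \<noteq> 0\<close>, the rank-one directions \<open>U = u w\<^sup>T\<close> already test every vector \<open>u\<close>.\<close>

lemma psd_if_nonneg_on_annihilators:
  assumes S: "symm r S" and Y: "Y \<in> carrier_mat r q"
    and w: "w \<in> carrier_vec q" "w \<noteq> 0\<^sub>v q" "Y *\<^sub>v w = 0\<^sub>v r"
    and nonneg: "\<forall>U \<in> carrier_mat r q. U * transpose_mat Y = 0\<^sub>m r r \<longrightarrow> 0 \<le> frob S (U * transpose_mat U)"
  shows "psd r S"
proof -
  have S_carrier: "S \<in> carrier_mat r r"
    using S by (rule symm_carrier)
  define ww where "ww = (\<Sum>c<q. w $ c * w $ c)"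
  have "0 < ww"
  proof -
    obtain c where c: "c < q" "w $ c \<noteq> 0"
      using w(1,2) by (metis carrier_vecD eq_vecI index_zero_vec)
    then have "0 < w $ c * w $ c"
      by (metis not_real_square_gt_zero)
    also have "\<dots> \<le> ww"
      unfolding ww_def using c by (intro member_le_sum) auto
    finally show ?thesis .
  qed
  have "0 \<le> bilin r (\<lambda>a b. S $$ (a, b)) u u" for u
  proof -
    define U where "U = mat r q (\<lambda>(a, c). u a * w $ c)"
    have U: "U \<in> carrier_mat r q"
      unfolding U_def by simp
    have "U * transpose_mat Y = 0\<^sub>m r r"
    proof (rule eq_matI)
      fix a b
      assume ab: "a < dim_row (0\<^sub>m r r :: real mat)" "b < dim_col (0\<^sub>m r r :: real mat)"
      have "(U * transpose_mat Y) $$ (a, b) = u a * (Y *\<^sub>v w) $ b"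
        using ab Y w(1) unfolding U_def
        by (simp add: scalar_prod_def atLeast0LessThan sum_distrib_left mult_ac)
      then show "(U * transpose_mat Y) $$ (a, b) = 0\<^sub>m r r $$ (a, b)"
        using ab w(3) by simp
    qed (use Y U in auto)
    then have "0 \<le> frob S (U * transpose_mat U)"
      using nonneg U by blast
    also have "frob S (U * transpose_mat U) = ww * bilin r (\<lambda>a b. S $$ (a, b)) u u"
      using S_carrier U unfolding U_def ww_def bilin_def
      by (subst frob_eq_sum[where r = r and c = r])
        (auto simp: scalar_prod_def atLeast0LessThan sum_distrib_left mult_ac intro!: sum.cong)
    finally show ?thesis
      using \<open>0 < ww\<close> by (simp add: zero_le_mult_iff)
  qed
  then show ?thesis
    using S S_carrier by (simp add: psd_iff_psd_on psd_on_def symm_iff_symmetric_on)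
qed

section \<open>Linear independence and rank\<close>

definition lin_indep_on :: "nat \<Rightarrow> 'i set \<Rightarrow> ('i \<Rightarrow> nat \<Rightarrow> real) \<Rightarrow> bool" where
  "lin_indep_on n I f \<longleftrightarrow> (\<forall>c. (\<forall>a<n. (\<Sum>t\<in>I. c t * f t a) = 0) \<longrightarrow> (\<forall>t\<in>I. c t = 0))"

lemma lin_indep_on_inj_on:
  assumes fin: "finite I" and indep: "lin_indep_on n I f"
  shows "inj_on (\<lambda>t. vec n (f t)) I"
proof (rule inj_onI, rule ccontr)
  fix s t
  assume st: "s \<in> I" "t \<in> I" "vec n (f s) = vec n (f t)" "s \<noteq> t"
  define c where "c u = (if u = s then 1 else if u = t then -1 else 0 :: real)" for u
  have "(\<Sum>u\<in>I. c u * f u a) = 0" if "a < n" for a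
  proof -
    have "(\<Sum>u\<in>I. c u * f u a) = (\<Sum>u\<in>I. (if u = s then f s a else 0) - (if u = t then f t a else 0))"
      using st(4) unfolding c_def by (intro sum.cong) auto
    also have "\<dots> = f s a - f t a"
      using fin st(1,2) by (simp add: sum_subtractf)
    also have "\<dots> = 0"
      using arg_cong[OF st(3), of "\<lambda>x. x $ a"] that by simp
    finally show ?thesis .
  qed
  then have "c s = 0"
    using indep st(1) unfolding lin_indep_on_def by blast
  then show False
    unfolding c_def by simp
qed

lemma lin_indep_on_card_le:
  assumes fin: "finite I" and indep: "lin_indep_on n I f"
  shows "card I \<le> n"
proof -
  interpret V: vec_space "TYPE(real)" n .
  define v where "v t = vec n (f t)" for t
  have inj: "inj_on v I"
    unfolding v_def using fin indep by (rule lin_indep_on_inj_on)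
  have carrier: "v ` I \<subseteq> carrier_vec n"
    by (auto simp: v_def)
  have "V.lin_indpt (v ` I)"
  proof
    assume "V.lin_dep (v ` I)"
    then obtain a z where a: "V.lincomb a (v ` I) = 0\<^sub>v n" "z \<in> v ` I" "a z \<noteq> 0"
      using V.finite_lin_dep[OF finite_imageI[OF fin] _ carrier] by auto
    have "(\<Sum>t\<in>I. a (v t) * f t i) = 0" if i: "i < n" for i
    proof -
      have "(\<Sum>t\<in>I. a (v t) * f t i) = (\<Sum>t\<in>I. a (v t) * v t $ i)"
        using i by (simp add: v_def)
      also have "\<dots> = V.lincomb a (v ` I) $ i"
        using V.lincomb_index[OF i carrier] by (simp add: sum.reindex[OF inj])
      finally show ?thesis
        using a(1) i by simp
    qed
    then have "\<forall>t\<in>I. a (v t) = 0"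
      using spec[OF indep[unfolded lin_indep_on_def], of "\<lambda>t. a (v t)"] by blast
    then show False
      using a(2,3) by auto
  qed
  then have "card (v ` I) \<le> n"
    using V.li_le_dim(2)[OF V.fin_dim carrier] V.dim_is_n by simp
  then show ?thesis
    by (simp add: card_image[OF inj])
qed

lemma exists_lin_indep_columns:
  assumes X: "X \<in> carrier_mat r c"
  shows "\<exists>Z. finite Z \<and> Z \<subseteq> set (cols X) \<and> card Z = vec_space.rank r X \<and>
             lin_indep_on r Z (\<lambda>z a. z $ a)"
proof -
  interpret V: vec_space "TYPE(real)" r .
  obtain Z where Z: "maximal Z (\<lambda>T. T \<subseteq> set (cols X) \<and> V.lin_indpt T)"
    using maximal_exists[of "\<lambda>T. T \<subseteq> set (cols X) \<and> V.lin_indpt T" "card (set (cols X))" "{}"]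
    by (meson List.finite_set card_mono empty_iff empty_subsetI V.finite_lin_indpt2 rev_finite_subset)
  have sub: "Z \<subseteq> set (cols X)" and indpt: "V.lin_indpt Z"
    using Z unfolding maximal_def by auto
  have fin: "finite Z"
    using sub finite_subset by blast
  have carrier: "Z \<subseteq> carrier_vec r"
    using sub X cols_dim by blast
  have "lin_indep_on r Z (\<lambda>z a. z $ a)"
    unfolding lin_indep_on_def
  proof (intro allI impI ballI)
    fix a u
    assume "\<forall>i<r. (\<Sum>z\<in>Z. a z * z $ i) = 0" and u: "u \<in> Z"
    then have "V.lincomb a Z = 0\<^sub>v r"
      using V.lincomb_dim[OF fin carrier] V.lincomb_index[OF _ carrier] by (intro eq_vecI) auto
    then show "a u = 0"
      using V.not_lindepD[OF indpt fin subset_refl, of a] u by auto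
  qed
  then show ?thesis
    using fin sub V.rank_card_indpt[OF X Z] by auto
qed

lemma rank_eq_if_injective:
  fixes Y :: "real mat"
  assumes Y: "Y \<in> carrier_mat r q"
    and inj: "\<forall>w\<in>carrier_vec q. Y *\<^sub>v w = 0\<^sub>v r \<longrightarrow> w = 0\<^sub>v q"
  shows "vec_space.rank r Y = q"
proof -
  interpret V: vec_space "TYPE(real)" r .
  have distinct: "distinct (cols Y)"
    unfolding distinct_conv_nth
  proof (intro allI impI)
    fix i j
    assume ij: "i < length (cols Y)" "j < length (cols Y)" "i \<noteq> j"
    define w where "w = vec q (\<lambda>t. if t = i then 1 else if t = j then -1 else 0 :: real)"
    have "w \<noteq> 0\<^sub>v q"
      using ij Y unfolding w_def by (auto simp: vec_eq_iff)
    then have "Y *\<^sub>v w \<noteq> 0\<^sub>v r"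
      using inj unfolding w_def by auto
    moreover have "Y *\<^sub>v w = col Y i - col Y j"
    proof (rule eq_vecI)
      fix a
      assume "a < dim_vec (col Y i - col Y j)"
      then have a: "a < r"
        using Y by simp
      have "(Y *\<^sub>v w) $ a = (\<Sum>t<q. (if t = i then Y $$ (a, i) else 0) - (if t = j then Y $$ (a, j) else 0))"
        using Y a ij(3) unfolding w_def by (auto simp: scalar_prod_def atLeast0LessThan intro!: sum.cong)
      also have "\<dots> = (col Y i - col Y j) $ a"
        using Y a ij by (simp add: sum_subtractf)
      finally show "(Y *\<^sub>v w) $ a = (col Y i - col Y j) $ a" .
    qed (use Y in simp)
    ultimately show "cols Y ! i \<noteq> cols Y ! j"
      using ij Y by auto
  qed
  have "V.lin_indpt (set (cols Y))"
    using V.lin_depE[OF Y _ distinct] inj by blast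
  then show ?thesis
    using V.lin_indpt_full_rank[OF Y distinct] by blast
qed

lemma lin_indep_on_empty [simp]: "lin_indep_on n {} f"
  unfolding lin_indep_on_def by simp

lemma lin_dep_on_insert_imp_span:
  assumes fin: "finite R" and indep: "lin_indep_on n R f" and dep: "\<not> lin_indep_on n (insert a R) f"
    and a: "a \<notin> R"
  shows "\<exists>co. \<forall>i<n. f a i = (\<Sum>s\<in>R. co s * f s i)"
proof -
  obtain c where rel: "\<forall>i<n. (\<Sum>s\<in>insert a R. c s * f s i) = 0" and nz: "\<exists>s\<in>insert a R. c s \<noteq> 0"
    using dep unfolding lin_indep_on_def by blast
  have rel': "c a * f a i + (\<Sum>s\<in>R. c s * f s i) = 0" if "i < n" for i
    using rel that fin a by simp
  have "c a \<noteq> 0"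
  proof
    assume "c a = 0"
    then have "\<forall>i<n. (\<Sum>s\<in>R. c s * f s i) = 0"
      using rel' by simp
    then have "\<forall>s\<in>R. c s = 0"
      using spec[OF indep[unfolded lin_indep_on_def], of c] by blast
    then show False
      using nz \<open>c a = 0\<close> by auto
  qed
  have "f a i = (\<Sum>s\<in>R. (- c s / c a) * f s i)" if "i < n" for i
    using rel'[OF that] \<open>c a \<noteq> 0\<close>
    by (simp add: sum_divide_distrib[symmetric] sum_negf field_simps eq_neg_iff_add_eq_0)
  then show ?thesis
    by (intro exI[of _ "\<lambda>s. - c s / c a"]) blast
qed

lemma exists_spanning_columns:
  fixes S :: "nat \<Rightarrow> nat \<Rightarrow> real"
  shows "\<exists>R \<subseteq> {..<n}. lin_indep_on n R (\<lambda>s a. S a s) \<and>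
           (\<forall>a<n. \<exists>co. \<forall>b<n. S b a = (\<Sum>s\<in>R. co s * S b s))"
proof -
  let ?P = "\<lambda>T. T \<subseteq> {..<n} \<and> lin_indep_on n T (\<lambda>s a. S a s)"
  obtain R where fin: "finite R" and max: "maximal R ?P"
    using maximal_exists_superset[of "{..<n}" ?P "{}"] by auto
  have R: "R \<subseteq> {..<n}" "lin_indep_on n R (\<lambda>s a. S a s)"
    using max unfolding maximal_def by auto
  have "\<exists>co. \<forall>b<n. S b a = (\<Sum>s\<in>R. co s * S b s)" if a: "a < n" for a
  proof (cases "a \<in> R")
    case True
    have "S b a = (\<Sum>s\<in>R. (if s = a then 1 else 0) * S b s)" for b
      using True fin by (simp add: if_distrib[of "\<lambda>x. x * _"] cong: if_cong)
    then show ?thesis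
      by (intro exI[of _ "\<lambda>s. if s = a then 1 else 0"]) blast
  next
    case False
    then have "\<not> lin_indep_on n (insert a R) (\<lambda>s a. S a s)"
      using max a R(1) unfolding maximal_def by blast
    then show ?thesis
      by (rule lin_dep_on_insert_imp_span[OF fin R(2) _ False])
  qed
  then show ?thesis
    using R by (intro exI[of _ R]) blast
qed

text \<open>Columns of a symmetric matrix are orthogonal to its kernel.\<close>

lemma lin_indep_on_columns_Plus_kernel:
  assumes sym: "symmetric_on n S" and R: "R \<subseteq> {..<n}" "lin_indep_on n R (\<lambda>s a. S a s)"
    and J: "finite J" "lin_indep_on n J z"
    and ker: "\<And>t a. t \<in> J \<Longrightarrow> a < n \<Longrightarrow> (\<Sum>b<n. S a b * z t b) = 0"
  shows "lin_indep_on n (R <+> J) (case_sum (\<lambda>s a. S a s) z)"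
  unfolding lin_indep_on_def
proof (intro allI impI)
  fix c
  assume rel: "\<forall>a<n. (\<Sum>t\<in>R <+> J. c t * case_sum (\<lambda>s a. S a s) z t a) = 0"
  have finR: "finite R"
    using R(1) finite_subset by blast
  define x where "x a = (\<Sum>s\<in>R. c (Inl s) * S a s)" for a
  define y where "y a = (\<Sum>t\<in>J. c (Inr t) * z t a)" for a
  have xy: "x a + y a = 0" if "a < n" for a
    using rel that finR J(1) unfolding x_def y_def by (simp add: sum.Plus)
  have orth: "(\<Sum>a<n. S a s * z t a) = 0" if "s \<in> R" "t \<in> J" for s t
    using ker[OF that(2), of s] sym R(1) that(1) unfolding symmetric_on_def
    by (auto simp: subset_iff intro!: sum.cong)
  have "(\<Sum>a<n. x a * y a) = (\<Sum>a<n. \<Sum>s\<in>R. \<Sum>t\<in>J. c (Inl s) * c (Inr t) * (S a s * z t a))"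
    unfolding x_def y_def sum_product by (simp add: mult_ac)
  also have "\<dots> = (\<Sum>s\<in>R. \<Sum>t\<in>J. c (Inl s) * c (Inr t) * (\<Sum>a<n. S a s * z t a))"
    by (subst sum.swap, rule sum.cong[OF refl], subst sum.swap) (simp add: sum_distrib_left)
  also have "\<dots> = 0"
    by (simp add: orth)
  finally have xy_orth: "(\<Sum>a<n. x a * y a) = 0" .
  have x_eq: "x a = - y a" if "a < n" for a
    using xy[OF that] by (simp add: eq_neg_iff_add_eq_0)
  have "(\<Sum>a<n. x a * x a) = - (\<Sum>a<n. x a * y a)"
    unfolding sum_negf[symmetric] by (intro sum.cong refl) (simp add: x_eq)
  then have "(\<Sum>a<n. x a * x a) = 0"
    using xy_orth by simp
  then have x0: "x a = 0" if "a < n" for a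
    using that sum_nonneg_eq_0_iff[of "{..<n}" "\<lambda>a. x a * x a"] by simp
  then have y0: "y a = 0" if "a < n" for a
    using x_eq that by simp
  have "\<forall>s\<in>R. c (Inl s) = 0"
    using spec[OF R(2)[unfolded lin_indep_on_def], of "\<lambda>s. c (Inl s)"] x0 unfolding x_def by blast
  moreover have "\<forall>t\<in>J. c (Inr t) = 0"
    using spec[OF J(2)[unfolded lin_indep_on_def], of "\<lambda>t. c (Inr t)"] y0 unfolding y_def by blast
  ultimately show "\<forall>t\<in>R <+> J. c t = 0"
    by (auto elim: PlusE)
qed

lemma symm_annihilator_spanning_columns:
  assumes S: "symm r S" and M: "M \<in> carrier_mat r c" and SM: "S * M = 0\<^sub>m r c"
  shows "\<exists>R \<subseteq> {..<r}. card R + vec_space.rank r M \<le> r \<and>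
           (\<forall>a<r. \<exists>co. \<forall>b<r. S $$ (b, a) = (\<Sum>s\<in>R. co s * S $$ (b, s)))"
proof -
  have S_carrier: "S \<in> carrier_mat r r"
    using S by (rule symm_carrier)
  obtain R where R: "R \<subseteq> {..<r}" "lin_indep_on r R (\<lambda>s a. S $$ (a, s))"
    and span: "\<forall>a<r. \<exists>co. \<forall>b<r. S $$ (b, a) = (\<Sum>s\<in>R. co s * S $$ (b, s))"
    using exists_spanning_columns[of r "\<lambda>a b. S $$ (a, b)"] by blast
  obtain Z where Z: "finite Z" "Z \<subseteq> set (cols M)" "card Z = vec_space.rank r M"
    "lin_indep_on r Z (\<lambda>z a. z $ a)"
    using exists_lin_indep_columns[OF M] by blast
  have ker: "(\<Sum>b<r. S $$ (a, b) * z $ b) = 0" if "z \<in> Z" "a < r" for z a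
  proof -
    have "z \<in> col M ` {..<c}"
      using Z(2) that(1) M by (auto simp: cols_def atLeast0LessThan)
    then obtain t where t: "t < c" "z = col M t"
      by blast
    show ?thesis
      using arg_cong[OF SM, of "\<lambda>X. X $$ (a, t)"] S_carrier M t that(2)
      by (simp add: scalar_prod_def atLeast0LessThan)
  qed
  have "lin_indep_on r (R <+> Z) (case_sum (\<lambda>s a. S $$ (a, s)) (\<lambda>z a. z $ a))"
    using S S_carrier by (intro lin_indep_on_columns_Plus_kernel R Z(1,4) ker)
      (simp_all add: symm_iff_symmetric_on)
  moreover have finR: "finite R"
    using finite_subset[OF R(1)] by simp
  ultimately have "card (R <+> Z) \<le> r"
    using Z(1) by (intro lin_indep_on_card_le) simp_all
  then show ?thesis
    using R(1) Z(1,3) span finR by (simp add: card_Plus) blast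
qed

section \<open>Counting coordinates\<close>

lemma tau_Suc: "tau (Suc r) = tau r + Suc r"
  unfolding tau_def by (simp add: numeral_2_eq_2)

lemma tau_mono: "r \<le> s \<Longrightarrow> tau r \<le> tau s"
  unfolding tau_def by (simp add: binomial_right_mono)

definition le_pairs :: "nat set \<Rightarrow> (nat \<times> nat) set" where
  "le_pairs X = {(a, b). a \<in> X \<and> b \<in> X \<and> a \<le> b}"

lemma finite_le_pairs: "finite X \<Longrightarrow> finite (le_pairs X)"
  by (rule finite_subset[of _ "X \<times> X"]) (auto simp: le_pairs_def)

lemma card_le_pairs: "finite X \<Longrightarrow> card (le_pairs X) = tau (card X)"
proof (induction X rule: finite_linorder_max_induct)
  case empty
  then show ?case
    by (simp add: le_pairs_def tau_def)
next
  case (insert b X)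
  let ?col = "(\<lambda>a. (a, b)) ` insert b X"
  have "le_pairs (insert b X) = le_pairs X \<union> ?col"
    using insert.hyps(2) unfolding le_pairs_def by (auto simp: less_imp_le)
  moreover have "card (le_pairs X \<union> ?col) = card (le_pairs X) + card ?col"
    using insert.hyps by (intro card_Un_disjoint finite_le_pairs) (auto simp: le_pairs_def)
  ultimately have "card (le_pairs (insert b X)) = card (le_pairs X) + card ?col"
    by simp
  moreover have "card ?col = card (insert b X)"
    by (rule card_image) (auto simp: inj_on_def)
  moreover have "b \<notin> X"
    using insert.hyps(2) by blast
  ultimately show ?case
    using insert by (simp add: tau_Suc)
qed

definition upper_entries :: "nat \<Rightarrow> (nat \<Rightarrow> nat) \<Rightarrow> (nat \<times> nat \<times> nat) set" where
  "upper_entries l n = {(j, a, a'). j < l \<and> a \<le> a' \<and> a' < n j}"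

definition entries_avoiding :: "nat \<Rightarrow> (nat \<Rightarrow> nat) \<Rightarrow> (nat \<Rightarrow> nat set) \<Rightarrow> (nat \<times> nat \<times> nat) set" where
  "entries_avoiding l n Rs = {(j, a, a'). j < l \<and> a \<le> a' \<and> a' < n j \<and> a \<notin> Rs j \<and> a' \<notin> Rs j}"

text \<open>Coordinates of the parameters of a cost whose slack has, in block \<open>j\<close>, its columns spanned by
  those indexed by \<open>Rs j\<close>: the upper-triangular entries in a row or column of \<open>Rs j\<close>, and the
  \<open>m\<close> multipliers.\<close>

definition param_coords :: "nat \<Rightarrow> (nat \<Rightarrow> nat) \<Rightarrow> nat \<Rightarrow> (nat \<Rightarrow> nat set) \<Rightarrow> ((nat \<times> nat \<times> nat) + nat) set" where
  "param_coords l n m Rs = (upper_entries l n - entries_avoiding l n Rs) <+> {..<m}"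

lemma cost_coords_eq: "cost_coords l n d = upper_entries l n <+> {..<d}"
  unfolding cost_coords_def upper_entries_def Plus_def ..

lemma finite_upper_entries: "finite (upper_entries l n)"
proof (rule finite_subset)
  show "upper_entries l n \<subseteq> (SIGMA j:{..<l}. {..<n j} \<times> {..<n j})"
    unfolding upper_entries_def by auto
qed auto

lemma finite_cost_coords: "finite (cost_coords l n d)"
  by (simp add: cost_coords_eq finite_upper_entries)

lemma finite_param_coords: "finite (param_coords l n m Rs)"
  by (simp add: param_coords_def finite_upper_entries)

lemma card_entries_avoiding:
  assumes "\<And>j. j < l \<Longrightarrow> Rs j \<subseteq> {..<n j}"
  shows "card (entries_avoiding l n Rs) = (\<Sum>j<l. tau (n j - card (Rs j)))"
proof -
  define E where "E j = (\<lambda>(a, a'). (j, a, a')) ` le_pairs ({..<n j} - Rs j)" for j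
  have "entries_avoiding l n Rs = (\<Union>j<l. E j)"
    unfolding entries_avoiding_def le_pairs_def E_def by auto
  moreover have "card (\<Union>j<l. E j) = (\<Sum>j<l. card (E j))"
    unfolding E_def by (rule card_UN_disjoint) (auto simp: finite_le_pairs)
  moreover have "card (E j) = tau (n j - card (Rs j))" if "j < l" for j
  proof -
    have "card ({..<n j} - Rs j) = n j - card (Rs j)"
      using assms[OF that] by (simp add: card_Diff_subset finite_subset)
    then show ?thesis
      unfolding E_def by (subst card_image) (auto simp: inj_on_def card_le_pairs)
  qed
  ultimately show ?thesis
    by simp
qed

lemma card_param_coords_less:
  assumes "\<And>j. j < l \<Longrightarrow> Rs j \<subseteq> {..<n j}"
    and count: "int m - int d < (\<Sum>j<l. int (tau (n j - card (Rs j))))"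
  shows "card (param_coords l n m Rs) < card (cost_coords l n d)"
proof -
  have sub: "entries_avoiding l n Rs \<subseteq> upper_entries l n"
    unfolding entries_avoiding_def upper_entries_def by auto
  then have "card (entries_avoiding l n Rs) \<le> card (upper_entries l n)"
    by (rule card_mono[OF finite_upper_entries])
  moreover have "int m < int d + int (card (entries_avoiding l n Rs))"
    using count card_entries_avoiding[OF assms(1)] by simp
  ultimately show ?thesis
    using finite_subset[OF sub finite_upper_entries]
    by (simp add: param_coords_def cost_coords_eq card_Plus finite_upper_entries card_Diff_subset[OF _ sub])
qed

section \<open>Lipschitz images of lower-dimensional spaces are null\<close>

definition cube :: "'a set \<Rightarrow> real \<Rightarrow> ('a \<Rightarrow> real) set" where
  "cube P r = PiE P (\<lambda>_. {-r..r})"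

definition grid_point :: "'a set \<Rightarrow> real \<Rightarrow> nat \<Rightarrow> ('a \<Rightarrow> nat) \<Rightarrow> 'a \<Rightarrow> real" where
  "grid_point P r M g = restrict (\<lambda>i. - r + 2 * r * real (g i) / real M) P"

lemma grid_index_approx:
  fixes r t :: real and M :: nat
  assumes r: "0 < r" and M: "1 \<le> M" and t: "- r \<le> t" "t \<le> r"
  defines "k \<equiv> min (M - 1) (nat \<lfloor>(t + r) * M / (2 * r)\<rfloor>)"
  shows "k < M" "\<bar>t - (- r + 2 * r * real k / M)\<bar> \<le> 2 * r / M"
proof -
  show "k < M" unfolding k_def using M by auto
  define s where "s = (t + r) * M / (2 * r)"
  have s0: "0 \<le> s" unfolding s_def using r t M by auto
  have sM: "s \<le> M" unfolding s_def using r t M by (auto simp: field_simps)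
  have ks: "real k \<le> s"
  proof -
    have "real k \<le> real (nat \<lfloor>s\<rfloor>)" unfolding k_def s_def by simp
    also have "\<dots> \<le> s" using s0 by simp
    finally show ?thesis .
  qed
  have sk: "s - real k \<le> 1"
  proof (cases "nat \<lfloor>s\<rfloor> \<le> M - 1")
    case True
    hence "k = nat \<lfloor>s\<rfloor>" unfolding k_def s_def by simp
    thus ?thesis using s0 by linarith
  next
    case False
    hence "k = M - 1" unfolding k_def s_def by simp
    thus ?thesis using sM M by simp
  qed
  have eq: "t - (-r + 2 * r * real k / M) = (s - real k) * (2 * r / M)"
    unfolding s_def using r M by (simp add: field_simps)
  have "0 \<le> (s - real k) * (2 * r / M)" using ks r by simp
  moreover have "(s - real k) * (2 * r / M) \<le> 1 * (2 * r / M)"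
    by (rule mult_right_mono) (use sk r in auto)
  ultimately show "\<bar>t - (-r + 2 * r * real k / M)\<bar> \<le> 2 * r / M" unfolding eq by simp
qed

lemma cube_grid_cover:
  assumes r: "0 < r" and M: "1 \<le> M" and x: "x \<in> cube P r"
  shows "\<exists>g\<in>PiE P (\<lambda>_. {..<M}). grid_point P r M g \<in> cube P r \<and>
           (\<forall>i\<in>P. \<bar>x i - grid_point P r M g i\<bar> \<le> 2 * r / M)"
proof -
  define g where "g = restrict (\<lambda>i. min (M - 1) (nat \<lfloor>(x i + r) * M / (2 * r)\<rfloor>)) P"
  have xi: "- r \<le> x i" "x i \<le> r" if "i \<in> P" for i
    using x that unfolding cube_def by auto
  have g: "g \<in> PiE P (\<lambda>_. {..<M})"
    unfolding g_def using grid_index_approx(1)[OF r M xi] by auto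
  have "grid_point P r M g \<in> cube P r"
    unfolding cube_def grid_point_def
  proof (rule restrict_PiE_iff[THEN iffD2], intro ballI)
    fix i
    assume "i \<in> P"
    then have "g i < M"
      using g by auto
    then have "2 * r * real (g i) / real M \<le> 2 * r"
      using r M by (simp add: field_simps)
    then show "- r + 2 * r * real (g i) / real M \<in> {- r..r}"
      using r by simp
  qed
  moreover have "\<forall>i\<in>P. \<bar>x i - grid_point P r M g i\<bar> \<le> 2 * r / M"
    using grid_index_approx(2)[OF r M xi] unfolding grid_point_def g_def by simp
  ultimately show ?thesis
    using g by blast
qed

lemma INT_null_if_emeasure_le_inverse:
  assumes sets: "\<And>M. U M \<in> sets N"
    and bound: "\<And>M. 1 \<le> M \<Longrightarrow> emeasure N (U M) \<le> ennreal (K / real M)"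
  shows "(\<Inter>M. U (Suc M)) \<in> null_sets N"
proof -
  have "emeasure N (\<Inter>M. U (Suc M)) \<le> 0"
  proof (rule ennreal_le_epsilon)
    fix e :: real
    assume e: "0 < e"
    define M where "M = Suc (nat \<lceil>K / e\<rceil>)"
    have "K / e \<le> real M"
      unfolding M_def by linarith
    then have "K / M \<le> e"
      using e by (simp add: M_def field_simps)
    have "(\<Inter>M. U (Suc M)) \<subseteq> U M"
      unfolding M_def by blast
    then have "emeasure N (\<Inter>M. U (Suc M)) \<le> emeasure N (U M)"
      by (rule emeasure_mono) (rule sets)
    also have "\<dots> \<le> ennreal (K / M)"
      by (rule bound) (simp add: M_def)
    also have "\<dots> \<le> ennreal e"
      using \<open>K / M \<le> e\<close> by (rule ennreal_leI)
    finally show "emeasure N (\<Inter>M. U (Suc M)) \<le> 0 + ennreal e"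
      by simp
  qed
  moreover have "(\<Inter>M. U (Suc M)) \<in> sets N"
    using sets by (intro sets.countable_INT) auto
  ultimately show ?thesis
    by (simp add: null_sets_def)
qed

lemma emeasure_grid_boxes_le:
  fixes z :: "('a \<Rightarrow> nat) \<Rightarrow> 'b \<Rightarrow> real"
  assumes P: "finite P" and Q: "finite Q" and PQ: "card P < card Q" and M: "1 \<le> M" and c: "0 \<le> c"
  shows "emeasure (PiM Q (\<lambda>_. lborel))
           (\<Union>g\<in>PiE P (\<lambda>_. {..<M}). PiE Q (\<lambda>q. {z g q - c / M .. z g q + c / M}))
         \<le> ennreal ((2 * c) ^ card Q / M)"
proof -
  interpret product_sigma_finite "\<lambda>_::'b. lborel"
    by standard
  let ?M = "PiM Q (\<lambda>_::'b. lborel)"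
  let ?Box = "\<lambda>g. PiE Q (\<lambda>q. {z g q - c / M .. z g q + c / M})"
  have c_M: "0 \<le> 2 * c / M"
    using c by simp
  have Box_emeasure: "emeasure ?M (?Box g) = ennreal ((2 * c / M) ^ card Q)" for g
  proof -
    have "emeasure ?M (?Box g) = (\<Prod>q\<in>Q. ennreal (2 * c / M))"
      using c by (simp add: emeasure_PiM[OF Q])
    also have "\<dots> = ennreal ((2 * c / M) ^ card Q)"
      using c_M by (simp add: prod_ennreal ennreal_power)
    finally show ?thesis .
  qed
  have "emeasure ?M (\<Union>g\<in>PiE P (\<lambda>_. {..<M}). ?Box g) \<le> (\<Sum>g\<in>PiE P (\<lambda>_. {..<M}). emeasure ?M (?Box g))"
    using P by (intro emeasure_subadditive_finite) (auto simp: finite_PiE intro!: sets_PiM_I_finite Q)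
  also have "\<dots> = ennreal (real M ^ card P * (2 * c / M) ^ card Q)"
    using P c_M by (simp add: Box_emeasure ennreal_mult' card_PiE ennreal_of_nat_eq_real_of_nat)
  also have "real M ^ card P * (2 * c / M) ^ card Q = (2 * c) ^ card Q * (real M ^ card P / real M ^ card Q)"
    by (simp add: power_divide)
  also have "\<dots> \<le> (2 * c) ^ card Q * (1 / M)"
  proof (rule mult_left_mono)
    have "real M ^ Suc (card P) \<le> real M ^ card Q"
      using PQ M by (intro power_increasing) auto
    then show "real M ^ card P / real M ^ card Q \<le> 1 / M"
      using M by (simp add: field_simps)
  qed (use c in simp)
  finally show ?thesis
    by (simp add: ennreal_leI)
qed

text \<open>The grid points of mesh \<open>2 r / M\<close> are \<open>M\<^bsup>card P\<^esup>\<close> in number, and the image of the cube lies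
  within \<open>O(1/M)\<close> of their images; the covering boxes have total measure \<open>O(M\<^bsup>card P - card Q\<^esup>)\<close>.\<close>

lemma lipschitz_image_cube_null:
  fixes F :: "('a \<Rightarrow> real) \<Rightarrow> 'b \<Rightarrow> real"
  assumes P: "finite P" and Q: "finite Q" and PQ: "card P < card Q"
    and r: "0 < r" and L: "0 \<le> L"
    and lip: "\<And>x y q. x \<in> cube P r \<Longrightarrow> y \<in> cube P r \<Longrightarrow> q \<in> Q \<Longrightarrow>
                \<bar>F x q - F y q\<bar> \<le> L * (\<Sum>i\<in>P. \<bar>x i - y i\<bar>)"
  shows "\<exists>N\<in>null_sets (PiM Q (\<lambda>_. lborel)). (\<lambda>x. restrict (F x) Q) ` cube P r \<subseteq> N"
proof -
  define c where "c = L * card P * (2 * r)"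
  define U where "U M = (\<Union>g\<in>PiE P (\<lambda>_. {..<M}).
      PiE Q (\<lambda>q. {F (grid_point P r M g) q - c / M .. F (grid_point P r M g) q + c / M}))" for M
  have "U M \<in> sets (PiM Q (\<lambda>_. lborel))" for M
    unfolding U_def using P Q by (intro sets.finite_UN sets_PiM_I_finite) (simp_all add: finite_PiE)
  moreover have "emeasure (PiM Q (\<lambda>_. lborel)) (U M) \<le> ennreal ((2 * c) ^ card Q / M)" if "1 \<le> M" for M
    unfolding U_def using L r by (intro emeasure_grid_boxes_le P Q PQ that) (simp add: c_def)
  ultimately have null: "(\<Inter>M. U (Suc M)) \<in> null_sets (PiM Q (\<lambda>_. lborel))"
    by (rule INT_null_if_emeasure_le_inverse)
  have "restrict (F x) Q \<in> U M" if x: "x \<in> cube P r" and M: "1 \<le> M" for x M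
  proof -
    obtain g where g: "g \<in> PiE P (\<lambda>_. {..<M})" and z: "grid_point P r M g \<in> cube P r"
      and close: "\<forall>i\<in>P. \<bar>x i - grid_point P r M g i\<bar> \<le> 2 * r / M"
      using cube_grid_cover[OF r M x] by blast
    have "\<bar>F x q - F (grid_point P r M g) q\<bar> \<le> c / M" if q: "q \<in> Q" for q
    proof -
      have "\<bar>F x q - F (grid_point P r M g) q\<bar> \<le> L * (\<Sum>i\<in>P. \<bar>x i - grid_point P r M g i\<bar>)"
        using lip[OF x z q] .
      also have "\<dots> \<le> L * (\<Sum>i\<in>P. 2 * r / M)"
        using close L by (intro mult_left_mono sum_mono) auto
      finally show ?thesis
        unfolding c_def by simp
    qed
    then have "restrict (F x) Q \<in>
        PiE Q (\<lambda>q. {F (grid_point P r M g) q - c / M .. F (grid_point P r M g) q + c / M})"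
      by (force simp: abs_le_iff)
    then show ?thesis
      unfolding U_def using g by blast
  qed
  then have "(\<lambda>x. restrict (F x) Q) ` cube P r \<subseteq> (\<Inter>M. U (Suc M))"
    by auto
  then show ?thesis
    using null by blast
qed

definition cube_lipschitz :: "'a set \<Rightarrow> (('a \<Rightarrow> real) \<Rightarrow> real) \<Rightarrow> bool" where
  "cube_lipschitz P g \<longleftrightarrow> (\<forall>r. \<exists>B L. 0 \<le> B \<and> 0 \<le> L \<and> (\<forall>x\<in>cube P r. \<bar>g x\<bar> \<le> B) \<and>
      (\<forall>x\<in>cube P r. \<forall>y\<in>cube P r. \<bar>g x - g y\<bar> \<le> L * (\<Sum>i\<in>P. \<bar>x i - y i\<bar>)))"

lemma cube_lipschitz_const: "cube_lipschitz P (\<lambda>_. c)"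
  unfolding cube_lipschitz_def by (intro allI exI[of _ "\<bar>c\<bar>"] exI[of _ 0]) auto

lemma cube_lipschitz_proj:
  assumes "finite P" "i \<in> P"
  shows "cube_lipschitz P (\<lambda>x. x i)"
  unfolding cube_lipschitz_def
proof
  fix r
  have "\<bar>x i\<bar> \<le> \<bar>r\<bar>" if "x \<in> cube P r" for x
    using that assms(2) unfolding cube_def by (auto simp: PiE_iff)
  moreover have "\<bar>x i - y i\<bar> \<le> 1 * (\<Sum>j\<in>P. \<bar>x j - y j\<bar>)" for x y :: "'a \<Rightarrow> real"
    using member_le_sum[of i P "\<lambda>j. \<bar>x j - y j\<bar>"] assms by simp
  ultimately show "\<exists>B L. 0 \<le> B \<and> 0 \<le> L \<and> (\<forall>x\<in>cube P r. \<bar>x i\<bar> \<le> B) \<and>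
      (\<forall>x\<in>cube P r. \<forall>y\<in>cube P r. \<bar>x i - y i\<bar> \<le> L * (\<Sum>j\<in>P. \<bar>x j - y j\<bar>))"
    by (intro exI[of _ "\<bar>r\<bar>"] exI[of _ 1]) auto
qed

lemma cube_lipschitz_add:
  assumes "cube_lipschitz P g" "cube_lipschitz P h"
  shows "cube_lipschitz P (\<lambda>x. g x + h x)"
  unfolding cube_lipschitz_def
proof
  fix r
  obtain B1 L1 where g: "0 \<le> B1" "0 \<le> L1" "\<forall>x\<in>cube P r. \<bar>g x\<bar> \<le> B1"
      "\<forall>x\<in>cube P r. \<forall>y\<in>cube P r. \<bar>g x - g y\<bar> \<le> L1 * (\<Sum>i\<in>P. \<bar>x i - y i\<bar>)"
    using assms(1) unfolding cube_lipschitz_def by blast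
  obtain B2 L2 where h: "0 \<le> B2" "0 \<le> L2" "\<forall>x\<in>cube P r. \<bar>h x\<bar> \<le> B2"
      "\<forall>x\<in>cube P r. \<forall>y\<in>cube P r. \<bar>h x - h y\<bar> \<le> L2 * (\<Sum>i\<in>P. \<bar>x i - y i\<bar>)"
    using assms(2) unfolding cube_lipschitz_def by blast
  have "\<bar>g x + h x\<bar> \<le> B1 + B2" if "x \<in> cube P r" for x
    using g(3) h(3) that by (meson abs_triangle_ineq add_mono order_trans)
  moreover have "\<bar>g x + h x - (g y + h y)\<bar> \<le> (L1 + L2) * (\<Sum>i\<in>P. \<bar>x i - y i\<bar>)"
    if "x \<in> cube P r" "y \<in> cube P r" for x y
  proof -
    have "\<bar>g x + h x - (g y + h y)\<bar> \<le> \<bar>g x - g y\<bar> + \<bar>h x - h y\<bar>"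
      by simp
    also have "\<dots> \<le> L1 * (\<Sum>i\<in>P. \<bar>x i - y i\<bar>) + L2 * (\<Sum>i\<in>P. \<bar>x i - y i\<bar>)"
      using g(4) h(4) that by (meson add_mono)
    finally show ?thesis
      by (simp add: distrib_right)
  qed
  ultimately show "\<exists>B L. 0 \<le> B \<and> 0 \<le> L \<and> (\<forall>x\<in>cube P r. \<bar>g x + h x\<bar> \<le> B) \<and>
      (\<forall>x\<in>cube P r. \<forall>y\<in>cube P r. \<bar>g x + h x - (g y + h y)\<bar> \<le> L * (\<Sum>i\<in>P. \<bar>x i - y i\<bar>))"
    using g h by (intro exI[of _ "B1 + B2"] exI[of _ "L1 + L2"]) auto
qed

lemma cube_lipschitz_mult:
  assumes "cube_lipschitz P g" "cube_lipschitz P h"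
  shows "cube_lipschitz P (\<lambda>x. g x * h x)"
  unfolding cube_lipschitz_def
proof
  fix r
  obtain B1 L1 where g: "0 \<le> B1" "0 \<le> L1" "\<forall>x\<in>cube P r. \<bar>g x\<bar> \<le> B1"
      "\<forall>x\<in>cube P r. \<forall>y\<in>cube P r. \<bar>g x - g y\<bar> \<le> L1 * (\<Sum>i\<in>P. \<bar>x i - y i\<bar>)"
    using assms(1) unfolding cube_lipschitz_def by blast
  obtain B2 L2 where h: "0 \<le> B2" "0 \<le> L2" "\<forall>x\<in>cube P r. \<bar>h x\<bar> \<le> B2"
      "\<forall>x\<in>cube P r. \<forall>y\<in>cube P r. \<bar>h x - h y\<bar> \<le> L2 * (\<Sum>i\<in>P. \<bar>x i - y i\<bar>)"
    using assms(2) unfolding cube_lipschitz_def by blast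
  have "\<bar>g x * h x\<bar> \<le> B1 * B2" if "x \<in> cube P r" for x
    using g(3) h(3) that by (simp add: abs_mult mult_mono')
  moreover have "\<bar>g x * h x - g y * h y\<bar> \<le> (B1 * L2 + B2 * L1) * (\<Sum>i\<in>P. \<bar>x i - y i\<bar>)"
    if "x \<in> cube P r" "y \<in> cube P r" for x y
  proof -
    define D where "D = (\<Sum>i\<in>P. \<bar>x i - y i\<bar>)"
    have "g x * h x - g y * h y = g x * (h x - h y) + h y * (g x - g y)"
      by (simp add: algebra_simps)
    then have "\<bar>g x * h x - g y * h y\<bar> \<le> \<bar>g x\<bar> * \<bar>h x - h y\<bar> + \<bar>h y\<bar> * \<bar>g x - g y\<bar>"
      by (simp add: abs_mult[symmetric] abs_triangle_ineq)
    also have "\<dots> \<le> B1 * (L2 * D) + B2 * (L1 * D)"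
      using g h that unfolding D_def by (intro add_mono mult_mono) auto
    finally show ?thesis
      unfolding D_def by (simp add: algebra_simps)
  qed
  ultimately show "\<exists>B L. 0 \<le> B \<and> 0 \<le> L \<and> (\<forall>x\<in>cube P r. \<bar>g x * h x\<bar> \<le> B) \<and>
      (\<forall>x\<in>cube P r. \<forall>y\<in>cube P r. \<bar>g x * h x - g y * h y\<bar> \<le> L * (\<Sum>i\<in>P. \<bar>x i - y i\<bar>))"
    using g h by (intro exI[of _ "B1 * B2"] exI[of _ "B1 * L2 + B2 * L1"]) auto
qed

lemma cube_lipschitz_sum:
  assumes "finite S" "\<And>s. s \<in> S \<Longrightarrow> cube_lipschitz P (g s)"
  shows "cube_lipschitz P (\<lambda>x. \<Sum>s\<in>S. g s x)"
  using assms
proof (induction S rule: finite_induct)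
  case empty
  then show ?case
    using cube_lipschitz_const[of P 0] by simp
next
  case (insert s S)
  then show ?case
    using cube_lipschitz_add[of P "g s" "\<lambda>x. \<Sum>s\<in>S. g s x"] by simp
qed

lemma cube_lipschitz_image_null:
  fixes F :: "('a \<Rightarrow> real) \<Rightarrow> 'b \<Rightarrow> real"
  assumes P: "finite P" and Q: "finite Q" and PQ: "card P < card Q"
    and lip: "\<And>q. q \<in> Q \<Longrightarrow> cube_lipschitz P (\<lambda>x. F x q)"
  shows "\<exists>N\<in>null_sets (PiM Q (\<lambda>_. lborel)). (\<lambda>x. restrict (F x) Q) ` PiE P (\<lambda>_. UNIV) \<subseteq> N"
proof -
  let ?M = "PiM Q (\<lambda>_::'b. lborel)"
  have "\<exists>N\<in>null_sets ?M. (\<lambda>x. restrict (F x) Q) ` cube P (Suc R) \<subseteq> N" for R :: nat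
  proof -
    have "\<forall>q\<in>Q. \<exists>L. 0 \<le> L \<and> (\<forall>x\<in>cube P (Suc R). \<forall>y\<in>cube P (Suc R).
        \<bar>F x q - F y q\<bar> \<le> L * (\<Sum>i\<in>P. \<bar>x i - y i\<bar>))"
      using lip unfolding cube_lipschitz_def by blast
    then obtain L where L: "\<And>q. q \<in> Q \<Longrightarrow> 0 \<le> L q \<and> (\<forall>x\<in>cube P (Suc R). \<forall>y\<in>cube P (Suc R).
        \<bar>F x q - F y q\<bar> \<le> L q * (\<Sum>i\<in>P. \<bar>x i - y i\<bar>))"
      by metis
    have uniform: "\<bar>F x q - F y q\<bar> \<le> (\<Sum>q\<in>Q. L q) * (\<Sum>i\<in>P. \<bar>x i - y i\<bar>)"
      if "x \<in> cube P (Suc R)" "y \<in> cube P (Suc R)" "q \<in> Q" for x y q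
    proof -
      have "\<bar>F x q - F y q\<bar> \<le> L q * (\<Sum>i\<in>P. \<bar>x i - y i\<bar>)"
        using L that by blast
      also have "\<dots> \<le> (\<Sum>q\<in>Q. L q) * (\<Sum>i\<in>P. \<bar>x i - y i\<bar>)"
        using L that(3) Q by (intro mult_right_mono member_le_sum sum_nonneg) auto
      finally show ?thesis .
    qed
    show ?thesis
      by (rule lipschitz_image_cube_null[OF P Q PQ _ _ uniform]) (use L in \<open>auto intro: sum_nonneg\<close>)
  qed
  then obtain N where N: "\<And>R. N R \<in> null_sets ?M"
    "\<And>R. (\<lambda>x. restrict (F x) Q) ` cube P (Suc R) \<subseteq> N R"
    by metis
  have "x \<in> cube P (Suc (nat \<lceil>\<Sum>i\<in>P. \<bar>x i\<bar>\<rceil>))" if "x \<in> PiE P (\<lambda>_. UNIV)" for x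
  proof -
    have "\<bar>x i\<bar> \<le> Suc (nat \<lceil>\<Sum>i\<in>P. \<bar>x i\<bar>\<rceil>)" if "i \<in> P" for i
      using member_le_sum[of i P "\<lambda>i. \<bar>x i\<bar>"] that P by linarith
    then show ?thesis
      using that unfolding cube_def by (force simp: PiE_iff abs_le_iff)
  qed
  then have "(\<lambda>x. restrict (F x) Q) ` PiE P (\<lambda>_. UNIV) \<subseteq> (\<Union>R. N R)"
    using N(2) by blast
  moreover have "(\<Union>R. N R) \<in> null_sets ?M"
    using N(1) by (intro null_sets_UN) auto
  ultimately show ?thesis
    by blast
qed

section \<open>Costs with a low-rank slack\<close>

type_synonym coord = "(nat \<times> nat \<times> nat) + nat"

text \<open>A parameter vector \<open>w\<close> on \<open>param_coords l n m Rs\<close> encodes a cost \<open>C = H\<^sup>T S H + \<A>\<^sup>*(\<lambda>)\<close>, block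
  by block: \<open>w (Inl (j, s, t))\<close> with \<open>s, t \<in> Rs j\<close> is the entry \<open>S\<^sub>s\<^sub>t\<close>, \<open>w (Inl (j, a, s))\<close> or
  \<open>w (Inl (j, s, a))\<close> with \<open>a \<notin> Rs j\<close>, \<open>s \<in> Rs j\<close> is the coefficient \<open>H\<^sub>a\<^sub>s\<close> of column \<open>s\<close> in column \<open>a\<close>,
  and \<open>w (Inr i)\<close> is the multiplier \<open>\<lambda>\<^sub>i\<close>.\<close>

definition param_coeff :: "(nat \<Rightarrow> nat set) \<Rightarrow> (coord \<Rightarrow> real) \<Rightarrow> nat \<Rightarrow> nat \<Rightarrow> nat \<Rightarrow> real" where
  "param_coeff Rs w j a s = (if a \<in> Rs j then (if a = s then 1 else 0) else w (Inl (j, min a s, max a s)))"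

definition cost_of_params :: "nat \<Rightarrow> (nat \<Rightarrow> nat \<Rightarrow> real mat) \<Rightarrow> (nat \<Rightarrow> real vec) \<Rightarrow> (nat \<Rightarrow> nat set)
    \<Rightarrow> (coord \<Rightarrow> real) \<Rightarrow> coord \<Rightarrow> real" where
  "cost_of_params m A A0 Rs w q = (case q of
      Inl (j, a, a') \<Rightarrow>
        (\<Sum>s\<in>Rs j. \<Sum>t\<in>Rs j. param_coeff Rs w j a s * param_coeff Rs w j a' t * w (Inl (j, min s t, max s t)))
        + (\<Sum>i<m. w (Inr i) * A i j $$ (a, a'))
    | Inr t \<Rightarrow> (\<Sum>i<m. w (Inr i) * A0 i $ t))"

definition low_rank_costs :: "nat \<Rightarrow> (nat \<Rightarrow> nat) \<Rightarrow> nat \<Rightarrow> nat \<Rightarrow> (nat \<Rightarrow> nat \<Rightarrow> real mat)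
    \<Rightarrow> (nat \<Rightarrow> real vec) \<Rightarrow> (nat \<Rightarrow> nat set) \<Rightarrow> (coord \<Rightarrow> real) set" where
  "low_rank_costs l n d m A A0 Rs =
     (\<lambda>w. restrict (cost_of_params m A A0 Rs w) (cost_coords l n d)) ` PiE (param_coords l n m Rs) (\<lambda>_. UNIV)"

lemma Inl_in_param_coords:
  assumes "j < l" "a < n j" "s < n j" "s \<in> Rs j"
  shows "Inl (j, min a s, max a s) \<in> param_coords l n m Rs"
  using assms unfolding param_coords_def upper_entries_def entries_avoiding_def
  by (auto simp: min_def max_def)

lemma Inr_in_param_coords: "i < m \<Longrightarrow> Inr i \<in> param_coords l n m Rs"
  unfolding param_coords_def by auto

lemma cost_of_params_cube_lipschitz:
  assumes R: "\<And>j. j < l \<Longrightarrow> Rs j \<subseteq> {..<n j}" and q: "q \<in> cost_coords l n d"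
  shows "cube_lipschitz (param_coords l n m Rs) (\<lambda>w. cost_of_params m A A0 Rs w q)"
proof -
  let ?P = "param_coords l n m Rs"
  have multipliers: "cube_lipschitz ?P (\<lambda>w. \<Sum>i<m. w (Inr i) * c i)" for c :: "nat \<Rightarrow> real"
    by (intro cube_lipschitz_sum cube_lipschitz_mult cube_lipschitz_proj cube_lipschitz_const
        finite_param_coords) (auto intro: Inr_in_param_coords)
  show ?thesis
  proof (cases q)
    case (Inr t)
    then show ?thesis
      unfolding cost_of_params_def using multipliers by simp
  next
    case (Inl e)
    then obtain j a a' where q_eq: "q = Inl (j, a, a')"
      by (cases e) auto
    then have j: "j < l" "a \<le> a'" "a' < n j"
      using q unfolding cost_coords_def by auto
    have coeff: "cube_lipschitz ?P (\<lambda>w. param_coeff Rs w j b s)" if "b < n j" "s \<in> Rs j" for b s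
      using that R[OF j(1)] j(1) Inl_in_param_coords[of j l b n s Rs m]
      by (cases "b \<in> Rs j") (auto simp: param_coeff_def cube_lipschitz_const cube_lipschitz_proj
          finite_param_coords)
    have entry: "cube_lipschitz ?P (\<lambda>w. w (Inl (j, min s t, max s t)))" if "s \<in> Rs j" "t \<in> Rs j" for s t
      using that R[OF j(1)] j(1) by (intro cube_lipschitz_proj finite_param_coords Inl_in_param_coords) auto
    have "finite (Rs j)"
      using R[OF j(1)] finite_subset by blast
    then show ?thesis
      unfolding cost_of_params_def q_eq using j
      by (simp, intro cube_lipschitz_add cube_lipschitz_sum cube_lipschitz_mult coeff entry multipliers) auto
  qed
qed

lemma exists_column_coefficients:
  fixes S :: "nat \<Rightarrow> nat \<Rightarrow> real"
  assumes R: "R \<subseteq> {..<n}" and span: "\<forall>a<n. \<exists>co. \<forall>b<n. S b a = (\<Sum>s\<in>R. co s * S b s)"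
  shows "\<exists>H. (\<forall>a\<in>R. \<forall>s. H a s = (if a = s then 1 else 0)) \<and>
             (\<forall>a<n. \<forall>b<n. S b a = (\<Sum>s\<in>R. H a s * S b s))"
proof -
  define H where "H a = (if a \<in> R then (\<lambda>s. if a = s then 1 else 0)
      else (SOME co. \<forall>b<n. S b a = (\<Sum>s\<in>R. co s * S b s)))" for a
  have "S b a = (\<Sum>s\<in>R. H a s * S b s)" if "a < n" "b < n" for a b
  proof (cases "a \<in> R")
    case True
    then have "(\<Sum>s\<in>R. H a s * S b s) = (\<Sum>s\<in>R. if s = a then S b a else 0)"
      unfolding H_def by (intro sum.cong refl) auto
    moreover have "finite R"
      using R finite_subset by blast
    ultimately show ?thesis
      using True by simp
  next
    case False
    then have H_a: "H a = (SOME co. \<forall>b<n. S b a = (\<Sum>s\<in>R. co s * S b s))"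
      unfolding H_def by simp
    have "\<forall>b<n. S b a = (\<Sum>s\<in>R. H a s * S b s)"
      unfolding H_a by (rule someI_ex[OF span[rule_format, OF that(1)]])
    then show ?thesis
      using that(2) by blast
  qed
  moreover have "\<forall>a\<in>R. \<forall>s. H a s = (if a = s then 1 else 0)"
    unfolding H_def by simp
  ultimately show ?thesis
    by blast
qed

lemma symmetric_spanned_factorization:
  assumes sym: "symmetric_on n S" and R: "R \<subseteq> {..<n}"
    and span: "\<forall>a<n. \<exists>co. \<forall>b<n. S b a = (\<Sum>s\<in>R. co s * S b s)"
  shows "\<exists>H. (\<forall>a\<in>R. \<forall>s. H a s = (if a = s then 1 else 0)) \<and>
             (\<forall>a<n. \<forall>a'<n. S a a' = (\<Sum>s\<in>R. \<Sum>t\<in>R. H a s * H a' t * S s t))"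
proof -
  obtain H where unit: "\<forall>a\<in>R. \<forall>s. H a s = (if a = s then 1 else 0)"
    and column: "\<And>a b. a < n \<Longrightarrow> b < n \<Longrightarrow> S b a = (\<Sum>s\<in>R. H a s * S b s)"
    using exists_column_coefficients[OF R span] by blast
  have "S a a' = (\<Sum>s\<in>R. \<Sum>t\<in>R. H a s * H a' t * S s t)" if a: "a < n" "a' < n" for a a'
  proof -
    have "S a a' = (\<Sum>t\<in>R. H a' t * S a t)"
      using column[OF a(2,1)] .
    also have "\<dots> = (\<Sum>t\<in>R. H a' t * (\<Sum>s\<in>R. H a s * S s t))"
    proof (intro sum.cong refl)
      fix t
      assume "t \<in> R"
      then have t: "t < n"
        using R by auto
      have "S a t = S t a"
        using sym a(1) t unfolding symmetric_on_def by blast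
      also have "\<dots> = (\<Sum>s\<in>R. H a s * S t s)"
        by (rule column[OF a(1) t])
      also have "\<dots> = (\<Sum>s\<in>R. H a s * S s t)"
        using sym R t unfolding symmetric_on_def by (intro sum.cong refl) auto
      finally show "H a' t * S a t = H a' t * (\<Sum>s\<in>R. H a s * S s t)"
        by simp
    qed
    also have "\<dots> = (\<Sum>s\<in>R. \<Sum>t\<in>R. H a s * H a' t * S s t)"
      by (subst sum.swap) (simp add: sum_distrib_left mult_ac)
    finally show ?thesis .
  qed
  then show ?thesis
    using unit by blast
qed

lemma in_low_rank_costsI:
  fixes v :: "coord \<Rightarrow> real" and lam :: "real vec" and n :: "nat \<Rightarrow> nat" and m :: nat
    and A :: "nat \<Rightarrow> nat \<Rightarrow> real mat"
  defines "S \<equiv> \<lambda>j a b. Sblk n m A (Cmat_of n v) lam j $$ (a, b)"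
  assumes v: "v \<in> PiE (cost_coords l n d) (\<lambda>_. UNIV)"
    and R: "\<And>j. j < l \<Longrightarrow> Rs j \<subseteq> {..<n j}"
    and sym: "\<And>j. j < l \<Longrightarrow> symmetric_on (n j) (S j)"
    and span: "\<And>j. j < l \<Longrightarrow> \<forall>a<n j. \<exists>co. \<forall>b<n j. S j b a = (\<Sum>s\<in>Rs j. co s * S j b s)"
    and c: "\<And>t. t < d \<Longrightarrow> v (Inr t) = (\<Sum>i<m. lam $ i * A0 i $ t)"
  shows "v \<in> low_rank_costs l n d m A A0 Rs"
proof -
  define H where "H j = (SOME H. (\<forall>a\<in>Rs j. \<forall>s. H a s = (if a = s then 1 else 0)) \<and>
      (\<forall>a<n j. \<forall>a'<n j. S j a a' = (\<Sum>s\<in>Rs j. \<Sum>t\<in>Rs j. H a s * H a' t * S j s t)))" for j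
  have H: "(\<forall>a\<in>Rs j. \<forall>s. H j a s = (if a = s then 1 else 0)) \<and>
      (\<forall>a<n j. \<forall>a'<n j. S j a a' = (\<Sum>s\<in>Rs j. \<Sum>t\<in>Rs j. H j a s * H j a' t * S j s t))"
    if "j < l" for j
    unfolding H_def by (rule someI_ex[OF symmetric_spanned_factorization[OF sym R span[OF that]]]) fact+
  then have H_unit: "\<And>j a s. j < l \<Longrightarrow> a \<in> Rs j \<Longrightarrow> H j a s = (if a = s then 1 else 0)"
    and H_factor: "\<And>j a a'. j < l \<Longrightarrow> a < n j \<Longrightarrow> a' < n j \<Longrightarrow>
      S j a a' = (\<Sum>s\<in>Rs j. \<Sum>t\<in>Rs j. H j a s * H j a' t * S j s t)"
    by blast+
  define w where "w = restrict (\<lambda>q. case q of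
      Inl (j, a, a') \<Rightarrow> (if a \<in> Rs j \<and> a' \<in> Rs j then S j a a' else if a \<in> Rs j then H j a' a else H j a a')
    | Inr i \<Rightarrow> lam $ i) (param_coords l n m Rs)"
  have w_lam: "w (Inr i) = lam $ i" if "i < m" for i
    unfolding w_def using that by (simp add: Inr_in_param_coords)
  have "cost_of_params m A A0 Rs w (Inl (j, a, a')) = v (Inl (j, a, a'))"
    if j: "j < l" "a \<le> a'" "a' < n j" for j a a'
  proof -
    have w_entry: "w (Inl (j, min s t, max s t)) = S j s t" if "s \<in> Rs j" "t \<in> Rs j" for s t
      using that R[OF j(1)] j(1) sym[OF j(1)] Inl_in_param_coords[of j l s n t Rs m]
      unfolding w_def symmetric_on_def by (auto simp: min_def max_def)
    have w_coeff: "param_coeff Rs w j b s = H j b s" if "b < n j" "s \<in> Rs j" for b s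
      using that R[OF j(1)] j(1) H_unit[OF j(1)] Inl_in_param_coords[of j l b n s Rs m]
      unfolding param_coeff_def w_def by (auto simp: min_def max_def)
    have "cost_of_params m A A0 Rs w (Inl (j, a, a')) =
        (\<Sum>s\<in>Rs j. \<Sum>t\<in>Rs j. H j a s * H j a' t * S j s t) + (\<Sum>i<m. lam $ i * A i j $$ (a, a'))"
      unfolding cost_of_params_def using w_lam w_entry w_coeff j R[OF j(1)]
      by (auto intro!: sum.cong)
    also have "\<dots> = v (Inl (j, a, a'))"
      using H_factor[of j a a'] j unfolding S_def by simp
    finally show ?thesis .
  qed
  moreover have "cost_of_params m A A0 Rs w (Inr t) = v (Inr t)" if "t < d" for t
    unfolding cost_of_params_def using w_lam c[OF that] by simp
  ultimately have "v q = restrict (cost_of_params m A A0 Rs w) (cost_coords l n d) q" for q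
    using v by (cases "q \<in> cost_coords l n d") (auto simp: cost_coords_def PiE_iff extensional_def)
  then have "v = restrict (cost_of_params m A A0 Rs w) (cost_coords l n d)" ..
  moreover have "w \<in> PiE (param_coords l n m Rs) (\<lambda>_. UNIV)"
    unfolding w_def by simp
  ultimately show ?thesis
    unfolding low_rank_costs_def by blast
qed

lemma low_rank_costs_null:
  assumes R: "\<And>j. j < l \<Longrightarrow> Rs j \<subseteq> {..<n j}"
    and count: "int m - int d < (\<Sum>j<l. int (tau (n j - card (Rs j))))"
  shows "\<exists>N\<in>null_sets (cost_measure l n d). low_rank_costs l n d m A A0 Rs \<subseteq> N"
  unfolding cost_measure_def low_rank_costs_def
  by (rule cube_lipschitz_image_null[OF finite_param_coords finite_cost_coords
        card_param_coords_less[OF R count] cost_of_params_cube_lipschitz[OF R]])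

section \<open>Spurious critical points\<close>

lemma m_prime_ge:
  assumes feas: "feasible l n d m A A0 b Xs x"
  shows "int m - int d - (\<Sum>j\<in>{k..<l}. int (tau (vec_space.rank (n j) (Xs j)))) \<le> m_prime l n d m A A0 b k"
proof -
  let ?B = "\<Sum>j\<in>{k..<l}. int (tau (n j))"
  let ?S = "{int m - int d - (\<Sum>j\<in>{k..<l}. int (tau (r j))) | r. possible_rank_tuple l n d m A A0 b k r}"
  have "?S \<subseteq> {int m - int d - ?B .. int m - int d}"
  proof
    fix z
    assume "z \<in> ?S"
    then obtain r where z: "z = int m - int d - (\<Sum>j\<in>{k..<l}. int (tau (r j)))"
      and "possible_rank_tuple l n d m A A0 b k r"
      by blast
    then obtain Xs' x' where feas': "feasible l n d m A A0 b Xs' x'"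
      and rank: "\<forall>j\<in>{k..<l}. vec_space.rank (n j) (Xs' j) = r j"
      unfolding possible_rank_tuple_def by blast
    have "r j \<le> n j" if "j \<in> {k..<l}" for j
      using vec_space.rank_le_nc[of "Xs' j" "n j" "n j"] feas' rank that
      unfolding feasible_def psd_def by auto
    then have "(\<Sum>j\<in>{k..<l}. int (tau (r j))) \<le> ?B"
      by (intro sum_mono) (simp add: tau_mono)
    then show "z \<in> {int m - int d - ?B .. int m - int d}"
      unfolding z by (simp add: sum_nonneg)
  qed
  then have "finite ?S"
    by (rule finite_subset) simp
  moreover have "possible_rank_tuple l n d m A A0 b k (\<lambda>j. vec_space.rank (n j) (Xs j))"
    using feas unfolding possible_rank_tuple_def by blast
  then have "int m - int d - (\<Sum>j\<in>{k..<l}. int (tau (vec_space.rank (n j) (Xs j)))) \<in> ?S"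
    by (intro CollectI exI[of _ "\<lambda>j. vec_space.rank (n j) (Xs j)"]) simp
  ultimately show ?thesis
    unfolding m_prime_def by (rule Max_ge)
qed

lemma spurious_imp_injective_factor:
  assumes A_sym: "\<And>i j. i < m \<Longrightarrow> j < l \<Longrightarrow> symm (n j) (A i j)"
    and kl: "k \<le> l"
    and C: "\<And>j. j < l \<Longrightarrow> symm (n j) (C j)" and c: "c \<in> carrier_vec d"
    and sp: "spurious_two_critical l n d m A A0 b k p C c Ys Xs x"
  shows "\<exists>lam. one_critical_mult l n d m A A0 b k p C c Ys Xs x lam \<and>
           (\<exists>j<k. \<forall>w\<in>carrier_vec (p j). Ys j *\<^sub>v w = 0\<^sub>v (n j) \<longrightarrow> w = 0\<^sub>v (p j))"
proof -
  obtain lam where crit: "one_critical_mult l n d m A A0 b k p C c Ys Xs x lam"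
    and second: "\<forall>j<k. \<forall>U \<in> carrier_mat (n j) (p j). Aj m A j (U * transpose_mat (Ys j)) = 0\<^sub>v m \<longrightarrow>
            frob (Sblk n m A C lam j) (U * transpose_mat U) \<ge> 0"
    and not_min: "\<not> bm_global_min l n d m A A0 b k p C c Ys Xs x"
    using sp unfolding spurious_two_critical_def two_critical_def by blast
  have "\<exists>j<k. \<forall>w\<in>carrier_vec (p j). Ys j *\<^sub>v w = 0\<^sub>v (n j) \<longrightarrow> w = 0\<^sub>v (p j)"
  proof (rule ccontr)
    assume "\<not> ?thesis"
    then have kernel: "\<exists>w\<in>carrier_vec (p j). w \<noteq> 0\<^sub>v (p j) \<and> Ys j *\<^sub>v w = 0\<^sub>v (n j)" if "j < k" for j
      using that by blast
    have "psd (n j) (Sblk n m A C lam j)" if j: "j < l" for j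
    proof (cases "j < k")
      case True
      then obtain w where w: "w \<in> carrier_vec (p j)" "w \<noteq> 0\<^sub>v (p j)" "Ys j *\<^sub>v w = 0\<^sub>v (n j)"
        using kernel by blast
      have "Ys j \<in> carrier_mat (n j) (p j)"
        using crit True unfolding one_critical_mult_def bm_feasible_def by blast
      moreover have "Aj m A j (0\<^sub>m (n j) (n j)) = 0\<^sub>v m"
        using A_sym j by (intro Aj_zero symm_carrier)
      ultimately show ?thesis
        using second True w C[OF j] A_sym j
        by (intro psd_if_nonneg_on_annihilators[of _ _ "Ys j" "p j" w] symm_Sblk) auto
    next
      case False
      then show ?thesis
        using crit j unfolding one_critical_mult_def by auto
    qed
    then have "bm_global_min l n d m A A0 b k p C c Ys Xs x"
      using symm_carrier[OF C] by (intro bm_global_min_if_psd_Sblk[OF A_sym kl _ c crit])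
    then show False
      using not_min by contradiction
  qed
  then show ?thesis
    using crit by blast
qed

lemma one_critical_slack_annihilates:
  assumes crit: "one_critical_mult l n d m A A0 b k p C c Ys Xs x lam" and j: "j < l"
  shows "Sblk n m A C lam j * (if j < k then Ys j else Xs j) =
           0\<^sub>m (n j) (if j < k then p j else n j)"
proof (cases "j < k")
  case True
  then show ?thesis
    using crit unfolding one_critical_mult_def by simp
next
  case False
  let ?S = "Sblk n m A C lam"
  have psd_S: "\<forall>i\<in>{k..<l}. psd (n i) (?S i)"
    and compl: "(\<Sum>i\<in>{k..<l}. frob (?S i) (Xs i)) = 0"
    and feas: "feasible l n d m A A0 b (qcomb k Ys Xs) x"
    using crit unfolding one_critical_mult_def bm_feasible_def by blast+
  have psd_X: "\<forall>i\<in>{k..<l}. psd (n i) (Xs i)"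
    using feas unfolding feasible_def qcomb_def by auto
  have "\<forall>i\<in>{k..<l}. 0 \<le> frob (?S i) (Xs i)"
    using psd_S psd_X by (blast intro: frob_psd_nonneg)
  then have "frob (?S j) (Xs j) = 0"
    using compl False j sum_nonneg_eq_0_iff[of "{k..<l}" "\<lambda>i. frob (?S i) (Xs i)"] by simp
  then show ?thesis
    using False j psd_S psd_X by (simp add: frob_psd_eq_0_imp_mult_eq_0)
qed

lemma cvec_of_carrier [simp]: "cvec_of d v \<in> carrier_vec d"
  unfolding cvec_of_def by simp

lemma sum_tau_gt:
  fixes m' z :: int and k l j0 :: nat
  assumes kl: "k \<le> l" and j0: "j0 < k" and gt: "m' < int (tau (r j0))"
    and ge: "z - (\<Sum>j\<in>{k..<l}. int (tau (r j))) \<le> m'"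
    and le: "\<And>j. j < l \<Longrightarrow> r j \<le> s j"
  shows "z < (\<Sum>j<l. int (tau (s j)))"
proof -
  have "int (tau (r j0)) + (\<Sum>j\<in>{k..<l}. int (tau (r j))) \<le> (\<Sum>j<l. int (tau (r j)))"
    using member_le_sum[of j0 "{..<k}" "\<lambda>j. int (tau (r j))"] j0
      sum.atLeastLessThan_concat[of 0 k l "\<lambda>j. int (tau (r j))"] kl
    by (simp add: atLeast0LessThan)
  moreover have "(\<Sum>j<l. int (tau (r j))) \<le> (\<Sum>j<l. int (tau (s j)))"
    using le by (intro sum_mono) (simp add: tau_mono)
  ultimately show ?thesis
    using gt ge by linarith
qed

lemma spurious_slack_low_rank:
  fixes lam :: "real vec"
  assumes kl: "k \<le> l"
    and A_sym: "\<And>i j. i < m \<Longrightarrow> j < l \<Longrightarrow> symm (n j) (A i j)"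
    and p_large: "\<And>j. j < k \<Longrightarrow> int (tau (p j)) > min (m_prime l n d m A A0 b k) (int (tau (n j)))"
    and sp: "spurious_two_critical l n d m A A0 b k p (Cmat_of n v) (cvec_of d v) Ys Xs x"
  shows "\<exists>lam. \<exists>Rs\<in>PiE {..<l} (\<lambda>j. Pow {..<n j}).
     int m - int d < (\<Sum>j<l. int (tau (n j - card (Rs j)))) \<and>
     (\<forall>j<l. \<forall>a<n j. \<exists>co. \<forall>b<n j. Sblk n m A (Cmat_of n v) lam j $$ (b, a) =
          (\<Sum>s\<in>Rs j. co s * Sblk n m A (Cmat_of n v) lam j $$ (b, s))) \<and>
     Svec d m A0 (cvec_of d v) lam = 0\<^sub>v d"
proof -
  obtain lam j0 where crit: "one_critical_mult l n d m A A0 b k p (Cmat_of n v) (cvec_of d v) Ys Xs x lam"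
    and j0: "j0 < k" and inj: "\<forall>w\<in>carrier_vec (p j0). Ys j0 *\<^sub>v w = 0\<^sub>v (n j0) \<longrightarrow> w = 0\<^sub>v (p j0)"
    using spurious_imp_injective_factor[OF A_sym kl symm_Cmat_of cvec_of_carrier sp] by blast
  let ?S = "Sblk n m A (Cmat_of n v) lam"
  define M where "M j = (if j < k then Ys j else Xs j)" for j
  define rk where "rk j = vec_space.rank (n j) (M j)" for j
  have feas: "feasible l n d m A A0 b (qcomb k Ys Xs) x"
    and Ys: "\<forall>j<k. Ys j \<in> carrier_mat (n j) (p j)"
    using crit unfolding one_critical_mult_def bm_feasible_def by blast+
  have M: "M j \<in> carrier_mat (n j) (if j < k then p j else n j)" if "j < l" for j
    using feas Ys that unfolding M_def feasible_def qcomb_def psd_def by auto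
  let ?good = "\<lambda>j R. R \<subseteq> {..<n j} \<and> card R + rk j \<le> n j \<and>
      (\<forall>a<n j. \<exists>co. \<forall>b<n j. ?S j $$ (b, a) = (\<Sum>s\<in>R. co s * ?S j $$ (b, s)))"
  have good_ex: "\<exists>R. ?good j R" if j: "j < l" for j
  proof -
    have "symm (n j) (?S j)"
      using symm_Sblk[of n j "Cmat_of n v" m A lam] symm_Cmat_of A_sym j by blast
    then have "\<exists>R \<subseteq> {..<n j}. card R + rk j \<le> n j \<and>
          (\<forall>a<n j. \<exists>co. \<forall>b<n j. ?S j $$ (b, a) = (\<Sum>s\<in>R. co s * ?S j $$ (b, s)))"
      unfolding rk_def
      by (rule symm_annihilator_spanning_columns[OF _ M[OF j]])
        (use one_critical_slack_annihilates[OF crit j] in \<open>simp add: M_def\<close>)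
    then show ?thesis
      by blast
  qed
  define Rs where "Rs = restrict (\<lambda>j. SOME R. ?good j R) {..<l}"
  have Rs: "?good j (Rs j)" if "j < l" for j
    using someI_ex[OF good_ex[OF that]] that unfolding Rs_def by simp
  have rk_j0: "rk j0 = p j0"
    using rank_eq_if_injective[OF _ inj] Ys j0 unfolding rk_def M_def by simp
  have "m_prime l n d m A A0 b k < int (tau (p j0))"
    using p_large[OF j0] tau_mono[of "p j0" "n j0"] Rs[of j0] rk_j0 j0 kl by linarith
  then have "m_prime l n d m A A0 b k < int (tau (rk j0))"
    by (simp add: rk_j0)
  moreover have "int m - int d - (\<Sum>j\<in>{k..<l}. int (tau (rk j))) \<le> m_prime l n d m A A0 b k"
    using m_prime_ge[OF feas, of k] unfolding rk_def M_def qcomb_def by simp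
  moreover have "rk j \<le> n j - card (Rs j)" if "j < l" for j
    using Rs[OF that] by linarith
  ultimately have "int m - int d < (\<Sum>j<l. int (tau (n j - card (Rs j))))"
    by (rule sum_tau_gt[OF kl j0])
  moreover have "Rs \<in> PiE {..<l} (\<lambda>j. Pow {..<n j})"
    using Rs by (auto simp: PiE_iff Rs_def)
  moreover have "Svec d m A0 (cvec_of d v) lam = 0\<^sub>v d"
    using crit unfolding one_critical_mult_def by blast
  ultimately show ?thesis
    using Rs by (intro exI[of _ lam] bexI[of _ Rs] conjI) blast+
qed

lemma spurious_cost_in_low_rank_costs:
  assumes kl: "k \<le> l"
    and A_sym: "\<And>i j. i < m \<Longrightarrow> j < l \<Longrightarrow> symm (n j) (A i j)"
    and p_large: "\<And>j. j < k \<Longrightarrow> int (tau (p j)) > min (m_prime l n d m A A0 b k) (int (tau (n j)))"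
    and v: "v \<in> PiE (cost_coords l n d) (\<lambda>_. UNIV)"
    and sp: "spurious_two_critical l n d m A A0 b k p (Cmat_of n v) (cvec_of d v) Ys Xs x"
  shows "\<exists>Rs\<in>PiE {..<l} (\<lambda>j. Pow {..<n j}). int m - int d < (\<Sum>j<l. int (tau (n j - card (Rs j)))) \<and>
           v \<in> low_rank_costs l n d m A A0 Rs"
proof -
  obtain lam Rs where Rs: "Rs \<in> PiE {..<l} (\<lambda>j. Pow {..<n j})"
    and count: "int m - int d < (\<Sum>j<l. int (tau (n j - card (Rs j))))"
    and span: "\<forall>j<l. \<forall>a<n j. \<exists>co. \<forall>b<n j. Sblk n m A (Cmat_of n v) lam j $$ (b, a) =
          (\<Sum>s\<in>Rs j. co s * Sblk n m A (Cmat_of n v) lam j $$ (b, s))"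
    and s: "Svec d m A0 (cvec_of d v) lam = 0\<^sub>v d"
    using spurious_slack_low_rank[OF kl A_sym p_large sp] by blast
  have "v (Inr t) = (\<Sum>i<m. lam $ i * A0 i $ t)" if "t < d" for t
    using arg_cong[OF s, of "\<lambda>u. u $ t"] that unfolding Svec_def cvec_of_def by simp
  moreover have "symmetric_on (n j) (\<lambda>a b. Sblk n m A (Cmat_of n v) lam j $$ (a, b))" if "j < l" for j
    using symm_Sblk[of n j "Cmat_of n v" m A lam] symm_Cmat_of A_sym that
    by (simp add: symm_iff_symmetric_on)
  ultimately have "v \<in> low_rank_costs l n d m A A0 Rs"
    using Rs span by (intro in_low_rank_costsI[OF v]) (auto simp: PiE_iff)
  then show ?thesis
    using Rs count by blast
qed

theorem theorem9:
  fixes l k d m :: nat and n p :: "nat \<Rightarrow> nat"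
    and A :: "nat \<Rightarrow> nat \<Rightarrow> real mat" and A0 :: "nat \<Rightarrow> real vec" and b :: "real vec"
  assumes k: "1 \<le> k" "k \<le> l"
    and A_sym: "\<And>i j. i < m \<Longrightarrow> j < l \<Longrightarrow> symm (n j) (A i j)"
    and A0_dim: "\<And>i. i < m \<Longrightarrow> A0 i \<in> carrier_vec d"
    and b_dim: "b \<in> carrier_vec m"
    and nonempty: "\<exists>Xs x. feasible l n d m A A0 b Xs x"
    and p_pos: "\<And>j. j < k \<Longrightarrow> p j > 0"
    and p_large: "\<And>j. j < k \<Longrightarrow>
        int (tau (p j)) > min (m_prime l n d m A A0 b k) (int (tau (n j)))"
  shows "AE v in cost_measure l n d.
           sdp_attained l n d m A A0 b (Cmat_of n v) (cvec_of d v) \<longrightarrow>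
           (\<forall>Ys Xs x. \<not> spurious_two_critical l n d m A A0 b k p
                          (Cmat_of n v) (cvec_of d v) Ys Xs x)"
proof -
  define Rss where "Rss = {Rs \<in> PiE {..<l} (\<lambda>j. Pow {..<n j}).
                            int m - int d < (\<Sum>j<l. int (tau (n j - card (Rs j))))}"
  have "AE v in cost_measure l n d. \<forall>Rs\<in>Rss. v \<notin> low_rank_costs l n d m A A0 Rs"
  proof (rule AE_finite_allI)
    show "finite Rss"
      unfolding Rss_def by (simp add: finite_PiE)
    fix Rs
    assume "Rs \<in> Rss"
    then obtain N where N: "N \<in> null_sets (cost_measure l n d)" "low_rank_costs l n d m A A0 Rs \<subseteq> N"
      using low_rank_costs_null[of l Rs n m d A A0] unfolding Rss_def by (auto simp: PiE_iff)
    show "AE v in cost_measure l n d. v \<notin> low_rank_costs l n d m A A0 Rs"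
      using AE_not_in[OF N(1)] by (rule eventually_mono) (use N(2) in blast)
  qed
  then show ?thesis
    using AE_space
  proof eventually_elim
    case (elim v)
    then have "v \<in> PiE (cost_coords l n d) (\<lambda>_. UNIV)"
      by (simp add: cost_measure_def space_PiM)
    then show ?case
      using spurious_cost_in_low_rank_costs[OF k(2) A_sym p_large] elim unfolding Rss_def by blast
  qed
qed

end
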